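(* Let $A$ be a commutative $\mathbb{F}_p$-algebra and $\delta=(\delta_1,\ldots,\delta_n)$ an $n$-tuple of pairwise commuting derivations of $A$. Let $d_1,\ldots,d_n\in\mathbb{N}\cup\{\infty\}$, $d=(d_1,\ldots,d_n)$, $I=\{\alpha\in\mathbb{N}^n\mid \alpha_i<p^{d_i}\ \forall i\}$. Suppose there are elements $y_{ik}\in A$ ($i=1,\ldots,n$; $k\in\mathbb{N}$, $k<d_i$) with $y_{ik}^p=0$, $\delta_i^{p^k}(y_{ik})=1$, and $\delta_j(y_{ik})=0$ for all $j\neq i$. For each $i$ let $\{x_i^{[j]}\mid 0\le j<p^{d_i}\}$ be the sequence obtained by the construction described in the context from the derivation $\delta_i$ and the elements $y_{i0},y_{i1},\ldots$. Then: (1) The family $\{x^{[\alpha]}:=x_1^{[\alpha_1]}\cdots x_n^{[\alpha_n]}\mid\alpha\in I\}$ is an iterative $\delta$-descent of exponent $d$. (2) Let $x'=\{x'^{[\alpha]}\mid\alpha\in I\}$ be any iterative $\delta$-descent of exponent $d$ in $A$. For each $i$, let $N_i=\{a\in A\mid \delta_i^{p^{d_i}}(a)=0\}$ (if $d_i=\infty$: the set of $a$ with $\delta_i^m(a)=0$ for some $m$) and $\mathfrak{m}_i=\bigoplus_{1\le j<p^{d_i}}A^{\delta_i}x'^{[je_i]}$, so that $N_i=A^{\delta_i}\oplus\mathfrak{m}_i$. For an iterative $\delta$-descent $y$ of exponent $d$, let $\lambda_{ij}(y)$ be the $A^{\delta_i}$-component of $y^{[p^je_i]}\in N_i$ ($0\le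 j<d_i$). Then $r_d:y\mapsto(\lambda_{ij}(y))_{i,j}$ is a bijection from the set of all iterative $\delta$-descents of exponent $d$ in $A$ onto $C(\delta,d)=\prod_{i=1}^n\{(\lambda_0,\lambda_1,\ldots,\lambda_{d_i-1})\mid \lambda_j\in A^\delta,\ \lambda_j^p=0\}$. (3) If in addition the ring $A^\delta=\bigcap_i\ker\delta_i$ is reduced, then the iterative $\delta$-descent in (1) is the only iterative $\delta$-descent of exponent $d$ in $A$.
   Context: For $\alpha\in\mathbb{N}^n$, $\delta^\alpha=\delta_1^{\alpha_1}\cdots\delta_n^{\alpha_n}$, $e_i$ the standard basis vectors, $A^{\delta_i}=\ker\delta_i$. A family $\{y^{[\alpha]}\mid\alpha\in I\}$ in $A$ is a $\delta$-descent if $y^{[0]}=1$ and $\delta^\alpha(y^{[\beta]})=y^{[\beta-\alpha]}$ for all $\alpha\in\mathbb{N}^n$, $\beta\in I$, where $y^{[\gamma]}:=0$ for $\gamma\notin\mathbb{N}^n$. It is iterative if $y^{[\alpha]}y^{[\beta]}=\binom{\alpha+\beta}{\beta}y^{[\alpha+\beta]}$ for all $\alpha,\beta\in I$, with $\binom{\alpha+\beta}{\beta}=\prod_i\binom{\alpha_i+\beta_i}{\beta_i}\in\mathbb{F}_p$ (the right side being $0$ when $\alpha+\beta\notin I$, in which case the coefficient vanishes mod $p$). An iterative $\delta$-descent indexed by $I$ has exponent $d$. Construction (for a derivation $\partial$ of $A$ and $y_0,\ldots,y_{e-1}$ with $y_k^p=0$, $\partial^{p^k}(y_k)=1$): $x^{[0]}=1$,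 $x^{[1]}=y_0$, $x^{[p]}=(-1)^{p-1}\phi_0(y_1)$ where $\phi_0(z)=\sum_{j=0}^{p-1}(-1)^j\frac{(x^{[1]})^j}{j!}\partial^j(z)$; recursively for $1\le k\le e-2$ (all $k\ge1$ if $e=\infty$), $x^{[p^{k+1}]}=(-1)^{p-1}\partial^{p^k-1}\Big(\prod_{l=0}^{k-1}\frac{(x^{[p^l]})^{p-1}}{(p-1)!}\cdot\phi_k(y_{k+1})\Big)$ with $\phi_k(z)=\sum_{j=0}^{p-1}(-1)^j\frac{(x^{[p^k]})^j}{j!}\partial^{p^kj}(z)$; and for $i=\sum_k i_kp^k$ ($0\le i_k<p$), $i<p^e$, $x^{[i]}=\prod_k\frac{(x^{[p^k]})^{i_k}}{i_k!}$. *)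

theory Defs
  imports Main "HOL-Computational_Algebra.Primes" "HOL-Library.Extended_Nat" "HOL-Library.FuncSet"
begin

text \<open>Indices i of the derivations run over 0..<n (the paper uses 1..n).
  Multi-indices alpha in N^n are functions nat => nat vanishing outside {..<n}.\<close>

definition is_derivation :: "('a::comm_ring_1 \<Rightarrow> 'a) \<Rightarrow> bool" where
  "is_derivation D \<longleftrightarrow> (\<forall>a b. D (a + b) = D a + D b) \<and> (\<forall>a b. D (a * b) = a * D b + b * D a)"

definition below_ppow :: "nat \<Rightarrow> enat \<Rightarrow> nat \<Rightarrow> bool" where
  "below_ppow p e a \<longleftrightarrow> (case e of enat m \<Rightarrow> a < p ^ m | \<infinity> \<Rightarrow> True)"

definition natn :: "nat \<Rightarrow> (nat \<Rightarrow> nat) set" where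
  "natn n = {\<alpha>. \<forall>i. n \<le> i \<longrightarrow> \<alpha> i = 0}"

definition idx_set :: "nat \<Rightarrow> nat \<Rightarrow> (nat \<Rightarrow> enat) \<Rightarrow> (nat \<Rightarrow> nat) set" where
  "idx_set p n d = {\<alpha> \<in> natn n. \<forall>i<n. below_ppow p (d i) (\<alpha> i)}"

primrec dpow :: "(nat \<Rightarrow> 'a \<Rightarrow> 'a) \<Rightarrow> nat \<Rightarrow> (nat \<Rightarrow> nat) \<Rightarrow> 'a \<Rightarrow> 'a" where
  "dpow \<delta> 0 \<alpha> = id"
| "dpow \<delta> (Suc n) \<alpha> = dpow \<delta> n \<alpha> \<circ> (\<delta> n ^^ \<alpha> n)"

definition mvec :: "nat \<Rightarrow> nat \<Rightarrow> nat \<Rightarrow> nat" where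
  "mvec i j = (\<lambda>l. if l = i then j else 0)"

definition mbinom :: "nat \<Rightarrow> (nat \<Rightarrow> nat) \<Rightarrow> (nat \<Rightarrow> nat) \<Rightarrow> nat" where
  "mbinom n \<alpha> \<beta> = (\<Prod>i<n. (\<alpha> i + \<beta> i) choose (\<beta> i))"

definition is_descent :: "nat \<Rightarrow> nat \<Rightarrow> (nat \<Rightarrow> 'a::comm_ring_1 \<Rightarrow> 'a) \<Rightarrow> (nat \<Rightarrow> enat)
    \<Rightarrow> ((nat \<Rightarrow> nat) \<Rightarrow> 'a) \<Rightarrow> bool" where
  "is_descent p n \<delta> d y \<longleftrightarrow> y (\<lambda>_. 0) = 1 \<and>
     (\<forall>\<alpha>\<in>natn n. \<forall>\<beta>\<in>idx_set p n d.
        dpow \<delta> n \<alpha> (y \<beta>) = (if (\<forall>i. \<alpha> i \<le> \<beta> i) then y (\<lambda>i. \<beta> i - \<alpha> i) else 0))"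

definition is_iterative :: "nat \<Rightarrow> nat \<Rightarrow> (nat \<Rightarrow> enat) \<Rightarrow> ((nat \<Rightarrow> nat) \<Rightarrow> 'a::comm_ring_1) \<Rightarrow> bool" where
  "is_iterative p n d y \<longleftrightarrow>
     (\<forall>\<alpha>\<in>idx_set p n d. \<forall>\<beta>\<in>idx_set p n d.
        y \<alpha> * y \<beta> = (if (\<lambda>i. \<alpha> i + \<beta> i) \<in> idx_set p n d
                       then of_nat (mbinom n \<alpha> \<beta>) * y (\<lambda>i. \<alpha> i + \<beta> i) else 0))"

text \<open>The set of all iterative delta-descents of exponent d (families indexed by I,
  represented as extensional functions on I).\<close>
definition iter_descents :: "nat \<Rightarrow> nat \<Rightarrow> (nat \<Rightarrow> 'a::comm_ring_1 \<Rightarrow> 'a) \<Rightarrow> (nat \<Rightarrow> enat)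
    \<Rightarrow> ((nat \<Rightarrow> nat) \<Rightarrow> 'a) set" where
  "iter_descents p n \<delta> d = {y \<in> extensional (idx_set p n d).
      is_descent p n \<delta> d y \<and> is_iterative p n d y}"

text \<open>Inverse in F_p of a natural number m not divisible by p (used for 1/j!).\<close>
definition fp_inv :: "nat \<Rightarrow> nat \<Rightarrow> 'a::comm_ring_1" where
  "fp_inv p m = of_nat (SOME k. (k * m) mod p = 1 mod p)"

text \<open>Table of x^[p^0], ..., x^[p^k] of the construction.\<close>
primrec xtab :: "nat \<Rightarrow> ('a::comm_ring_1 \<Rightarrow> 'a) \<Rightarrow> (nat \<Rightarrow> 'a) \<Rightarrow> nat \<Rightarrow> nat \<Rightarrow> 'a" where
  "xtab p D y 0 = (\<lambda>_. 0)(0 := y 0)"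
| "xtab p D y (Suc k) = (let f = xtab p D y k in
     f(Suc k := (-1) ^ (p - 1) * (D ^^ (p ^ k - 1))
        ((\<Prod>l<k. f l ^ (p - 1) * fp_inv p (fact (p - 1))) *
         (\<Sum>j<p. (-1) ^ j * f k ^ j * fp_inv p (fact j) * (D ^^ (p ^ k * j)) (y (Suc k))))))"

definition xpp :: "nat \<Rightarrow> ('a::comm_ring_1 \<Rightarrow> 'a) \<Rightarrow> (nat \<Rightarrow> 'a) \<Rightarrow> nat \<Rightarrow> 'a" where
  "xpp p D y k = xtab p D y k k"

text \<open>x^[i] = prod_k (x^[p^k])^(i_k) / i_k!, i = sum_k i_k p^k (digits i_k = 0 for k > i).\<close>
definition xseq :: "nat \<Rightarrow> ('a::comm_ring_1 \<Rightarrow> 'a) \<Rightarrow> (nat \<Rightarrow> 'a) \<Rightarrow> nat \<Rightarrow> 'a" where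
  "xseq p D y i = (\<Prod>k\<le>i. xpp p D y k ^ (i div p ^ k mod p) * fp_inv p (fact (i div p ^ k mod p)))"

definition kerD :: "('a::comm_ring_1 \<Rightarrow> 'a) \<Rightarrow> 'a set" where
  "kerD D = {a. D a = 0}"

definition Adelta :: "nat \<Rightarrow> (nat \<Rightarrow> 'a::comm_ring_1 \<Rightarrow> 'a) \<Rightarrow> 'a set" where
  "Adelta n \<delta> = {a. \<forall>i<n. \<delta> i a = 0}"

definition Nset :: "nat \<Rightarrow> ('a::comm_ring_1 \<Rightarrow> 'a) \<Rightarrow> enat \<Rightarrow> 'a set" where
  "Nset p D e = {a. case e of enat m \<Rightarrow> (D ^^ (p ^ m)) a = 0 | \<infinity> \<Rightarrow> (\<exists>m. (D ^^ m) a = 0)}"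

definition jset :: "nat \<Rightarrow> enat \<Rightarrow> nat set" where
  "jset p e = {j. 1 \<le> j \<and> below_ppow p e j}"

definition mset :: "nat \<Rightarrow> ('a::comm_ring_1 \<Rightarrow> 'a) \<Rightarrow> enat \<Rightarrow> ((nat \<Rightarrow> nat) \<Rightarrow> 'a) \<Rightarrow> nat \<Rightarrow> 'a set" where
  "mset p D e x' i = {(\<Sum>j\<in>J. c j * x' (mvec i j)) | J c.
      finite J \<and> J \<subseteq> jset p e \<and> (\<forall>j\<in>J. c j \<in> kerD D)}"

definition lam :: "nat \<Rightarrow> (nat \<Rightarrow> 'a::comm_ring_1 \<Rightarrow> 'a) \<Rightarrow> (nat \<Rightarrow> enat) \<Rightarrow> ((nat \<Rightarrow> nat) \<Rightarrow> 'a)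
    \<Rightarrow> nat \<Rightarrow> nat \<Rightarrow> ((nat \<Rightarrow> nat) \<Rightarrow> 'a) \<Rightarrow> 'a" where
  "lam p \<delta> d x' i j y = (THE c. c \<in> kerD (\<delta> i) \<and> y (mvec i (p ^ j)) - c \<in> mset p (\<delta> i) (d i) x' i)"

definition Kset :: "nat \<Rightarrow> (nat \<Rightarrow> enat) \<Rightarrow> (nat \<times> nat) set" where
  "Kset n d = {(i, j). i < n \<and> enat j < d i}"

definition rmap :: "nat \<Rightarrow> nat \<Rightarrow> (nat \<Rightarrow> 'a::comm_ring_1 \<Rightarrow> 'a) \<Rightarrow> (nat \<Rightarrow> enat) \<Rightarrow> ((nat \<Rightarrow> nat) \<Rightarrow> 'a)
    \<Rightarrow> ((nat \<Rightarrow> nat) \<Rightarrow> 'a) \<Rightarrow> (nat \<times> nat \<Rightarrow> 'a)" where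
  "rmap p n \<delta> d x' y = restrict (\<lambda>(i, j). lam p \<delta> d x' i j y) (Kset n d)"

definition Cset :: "nat \<Rightarrow> nat \<Rightarrow> (nat \<Rightarrow> 'a::comm_ring_1 \<Rightarrow> 'a) \<Rightarrow> (nat \<Rightarrow> enat) \<Rightarrow> (nat \<times> nat \<Rightarrow> 'a) set" where
  "Cset p n \<delta> d = {c \<in> extensional (Kset n d).
      \<forall>ij\<in>Kset n d. c ij \<in> Adelta n \<delta> \<and> c ij ^ p = 0}"

end

theory Submission
  imports Defs "HOL-Number_Theory.Cong"
begin

text \<open>Each \<open>x\<^sub>i\<^sup>[\<^sup>j\<^sup>]\<close> is the product over the base-\<open>p\<close> digits \<open>j\<^sub>k\<close> of \<open>j\<close> of the divided powers
  \<open>(x\<^sub>i\<^sup>[\<^sup>p\<^sup>\<^sup>k\<^sup>])\<^sup>j\<^sup>\<^sub>k / j\<^sub>k!\<close>. By Lucas' theorem such a digit product is iterative once every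
  \<open>x\<^sub>i\<^sup>[\<^sup>p\<^sup>\<^sup>k\<^sup>]\<close> is \<open>p\<close>-nilpotent, and it is a \<open>\<delta>\<^sub>i\<close>-descent once \<open>\<delta>\<^sub>i x\<^sub>i\<^sup>[\<^sup>p\<^sup>\<^sup>k\<^sup>] = x\<^sub>i\<^sup>[\<^sup>p\<^sup>\<^sup>k\<^sup>-\<^sup>1\<^sup>]\<close>;
  both follow by induction on \<open>k\<close> from the telescoping identity
  \<open>\<delta>\<^sup>p\<^sup>\<^sup>k \<phi>\<^sub>k(z) = (x\<^sup>[\<^sup>p\<^sup>\<^sup>k\<^sup>])\<^sup>p\<^sup>-\<^sup>1/(p-1)! \<delta>\<^sup>p\<^sup>\<^sup>k\<^sup>+\<^sup>1 z\<close> and Frobenius.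

  An iterative \<open>\<delta>\<close>-descent is the product of its restrictions to the axes. On the \<open>i\<close>-th axis,
  applying \<open>\<delta>\<^sub>i\<^sup>m\<close> with \<open>m\<close> the top index isolates the top coefficient of \<open>\<Sum> c\<^sub>j x'\<^sup>[\<^sup>j\<^sup>e\<^sup>\<^sub>i\<^sup>]\<close>,
  which gives \<open>N\<^sub>i = A\<^sup>\<delta>\<^sup>\<^sub>i \<oplus> m\<^sub>i\<close>. A descent \<open>y\<close> is determined by its components \<open>\<lambda>\<^sub>i\<^sub>k(y)\<close>: off the
  powers of \<open>p\<close> iterativity expresses \<open>y\<^sup>[\<^sup>j\<^sup>e\<^sup>\<^sub>i\<^sup>]\<close> through smaller indices with a binomial
  coefficient prime to \<open>p\<close>, and at \<open>p\<^sup>k\<close> two candidates with the same component differ by an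
  element of \<open>A\<^sup>\<delta>\<^sup>\<^sub>i \<inter> m\<^sub>i = 0\<close>. Conversely a given \<open>\<lambda>\<close> is realised by convolving each axis of \<open>x'\<close> with
  the digit product of the \<open>\<lambda>\<^sub>i\<^sub>k\<close>. If \<open>A\<^sup>\<delta>\<close> is reduced, \<open>C(\<delta>, d)\<close> is a single point.\<close>

section \<open>Arithmetic modulo a prime\<close>

lemma of_nat_eq_if_cong_char:
  assumes "of_nat p = (0::'a::comm_ring_1)" "[a = b] (mod p)"
  shows "(of_nat a :: 'a) = of_nat b"
  using assms by (simp add: of_nat_eq_iff_cong_CHAR of_nat_eq_0_iff_char_dvd cong_dvd_modulus_nat)

lemma of_nat_eq_0_if_char_dvd:
  assumes "of_nat p = (0::'a::comm_ring_1)" "p dvd m"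
  shows "(of_nat m :: 'a) = 0"
  using assms by (simp add: of_nat_eq_0_iff_char_dvd dvd_trans)

lemma choose_add_prime_cong:
  assumes "prime p"
  shows "[(n + p) choose m = (n choose m) + (if p \<le> m then n choose (m - p) else 0)] (mod p)"
proof -
  have "(n + p) choose m = (\<Sum>k\<le>m. (p choose k) * (n choose (m - k)))"
    using vandermonde[of p n m] by (simp add: add.commute)
  also have "[\<dots> = (\<Sum>k\<le>m. (if k = 0 then n choose m else if k = p then n choose (m - p) else 0))] (mod p)"
  proof (rule cong_sum)
    fix k assume "k \<in> {..m}"
    show "[(p choose k) * (n choose (m - k)) = (if k = 0 then n choose m else if k = p then n choose (m - p) else 0)] (mod p)"
    proof (cases "k = 0 \<or> k = p \<or> p < k")
      case True thus ?thesis by (auto simp: binomial_eq_0)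
    next
      case False
      hence "p dvd (p choose k)" using assms by (intro dvd_choose_prime) (auto simp: prime_gt_0_nat)
      thus ?thesis using False by (auto simp: cong_0_iff)
    qed
  qed
  also have "(\<Sum>k\<le>m. (if k = 0 then n choose m else if k = p then n choose (m - p) else 0)) =
     (\<Sum>k\<le>m. (if k = 0 then n choose m else 0)) + (\<Sum>k\<le>m. (if k = p then n choose (m - p) else 0))"
    using assms by (subst sum.distrib[symmetric]) (rule sum.cong, auto)
  finally show ?thesis by (simp add: sum.delta)
qed

lemma lucas_cong:
  assumes "prime p" "r < p" "s < p"
  shows "[(r + p * c) choose (s + p * d) = (r choose s) * (c choose d)] (mod p)"
proof (induction c arbitrary: d)
  case 0
  show ?case
  proof (cases d)
    case (Suc d')
    hence "r < s + p * d" using assms by (simp add: add.commute trans_less_add1)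
    thus ?thesis using Suc by (simp add: binomial_eq_0)
  qed simp
next
  case (Suc c)
  have "[(r + p * Suc c) choose (s + p * d) = ((r + p * c) choose (s + p * d)) +
      (if p \<le> s + p * d then (r + p * c) choose (s + p * d - p) else 0)] (mod p)"
    using choose_add_prime_cong[OF assms(1), of "r + p * c" "s + p * d"]
    by (simp add: add.assoc mult_Suc_right add.commute[of p])
  moreover have "[((r + p * c) choose (s + p * d)) +
      (if p \<le> s + p * d then (r + p * c) choose (s + p * d - p) else 0) =
      (r choose s) * (c choose d) + (if d \<noteq> 0 then (r choose s) * (c choose (d - 1)) else 0)] (mod p)"
  proof (cases d)
    case 0
    hence "\<not> p \<le> s + p * d" using assms by simp
    thus ?thesis using Suc.IH[of d] 0 by simp
  next
    case (Suc d')
    hence "p \<le> s + p * d" "s + p * d - p = s + p * d'" by auto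
    thus ?thesis using Suc.IH[of d] Suc.IH[of d'] Suc by (auto intro: cong_add)
  qed
  moreover have "(r choose s) * (c choose d) + (if d \<noteq> 0 then (r choose s) * (c choose (d - 1)) else 0)
     = (r choose s) * (Suc c choose d)"
    by (cases d) (auto simp: algebra_simps)
  ultimately show ?case by (metis cong_trans)
qed

lemma lucas_cong_power:
  assumes "prime p" "r < p ^ k" "s < p ^ k"
  shows "[(r + p ^ k * c) choose (s + p ^ k * d) = (r choose s) * (c choose d)] (mod p)"
  using assms(2,3)
proof (induction k arbitrary: r s)
  case (Suc k)
  have p0: "p > 0" using assms(1) prime_gt_0_nat by blast
  define r0 r1 s0 s1 where "r0 = r mod p" "r1 = r div p" "s0 = s mod p" "s1 = s div p"
  have r: "r = r0 + p * r1" and s: "s = s0 + p * s1" unfolding r0_r1_s0_s1_def by simp_all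
  have r0: "r0 < p" and s0: "s0 < p" unfolding r0_r1_s0_s1_def using p0 by simp_all
  have r1: "r1 < p ^ k" and s1: "s1 < p ^ k" unfolding r0_r1_s0_s1_def using Suc.prems
    by (simp_all add: div_less_iff_less_mult mult.commute p0)
  have e1: "r + p ^ Suc k * c = r0 + p * (r1 + p ^ k * c)" using r by (simp add: algebra_simps)
  have e2: "s + p ^ Suc k * d = s0 + p * (s1 + p ^ k * d)" using s by (simp add: algebra_simps)
  have "[(r + p ^ Suc k * c) choose (s + p ^ Suc k * d) =
      (r0 choose s0) * ((r1 + p ^ k * c) choose (s1 + p ^ k * d))] (mod p)"
    unfolding e1 e2 by (rule lucas_cong[OF assms(1) r0 s0])
  moreover have "[(r0 choose s0) * ((r1 + p ^ k * c) choose (s1 + p ^ k * d)) =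
      (r0 choose s0) * ((r1 choose s1) * (c choose d))] (mod p)"
    by (intro cong_mult cong_refl Suc.IH r1 s1)
  moreover have "[(r choose s) = (r0 choose s0) * (r1 choose s1)] (mod p)"
    unfolding r s by (rule lucas_cong[OF assms(1) r0 s0])
  ultimately show ?case
    by (metis (no_types, lifting) cong_scalar_right cong_sym cong_trans mult.assoc)
qed simp

lemma prime_dvd_choose_small:
  assumes "prime p" "c < p" "d < p" "p \<le> c + d"
  shows "p dvd ((c + d) choose c)"
proof -
  have "fact (c + d) = fact c * fact d * ((c + d) choose c)"
    using binomial_fact_lemma[of c "c + d"] by simp
  moreover have "p dvd fact (c + d)" using assms prime_dvd_fact_iff by blast
  moreover have "\<not> p dvd fact c * fact d"
    using assms by (simp add: prime_dvd_mult_iff prime_dvd_fact_iff)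
  ultimately show ?thesis using assms(1) by (metis prime_dvd_mult_iff)
qed

lemma lucas_cong_carry:
  assumes "prime p" "r < p ^ K" "s < p ^ K"
  shows "[(r + p ^ K * c + (s + p ^ K * d)) choose (r + p ^ K * c) =
    (if r + s < p ^ K then ((r + s) choose r) * ((c + d) choose c) else 0)] (mod p)"
proof (cases "r + s < p ^ K")
  case True
  have e: "r + p ^ K * c + (s + p ^ K * d) = (r + s) + p ^ K * (c + d)" by (simp add: algebra_simps)
  show ?thesis unfolding e using lucas_cong_power[OF assms(1) True assms(2), of "c + d" c] True by simp
next
  case False
  have "r + p ^ K * c + (s + p ^ K * d) = (r + s - p ^ K) + p ^ K * (c + d + 1)"
    using False by (simp add: algebra_simps)
  moreover have "r + s - p ^ K < p ^ K" using assms(2,3) by simp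
  ultimately have "[(r + p ^ K * c + (s + p ^ K * d)) choose (r + p ^ K * c) =
      ((r + s - p ^ K) choose r) * ((c + d + 1) choose c)] (mod p)"
    using lucas_cong_power[OF assms(1) _ assms(2)] by presburger
  moreover have "(r + s - p ^ K) choose r = 0" using assms(3) False by (simp add: binomial_eq_0)
  ultimately show ?thesis using False by simp
qed

lemma prime_dvd_choose_overflow:
  assumes "prime p" "a < p ^ Suc K" "b < p ^ Suc K" "p ^ Suc K \<le> a + b"
  shows "p dvd ((a + b) choose a)"
proof -
  have p0: "p > 0" using assms(1) prime_gt_0_nat by blast
  define r c s d where "r = a mod p ^ K" "c = a div p ^ K" "s = b mod p ^ K" "d = b div p ^ K"
  have ab: "a = r + p ^ K * c" "b = s + p ^ K * d" unfolding r_c_s_d_def by simp_all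
  have rs: "r < p ^ K" "s < p ^ K" unfolding r_c_s_d_def using p0 by simp_all
  have cd: "c < p" "d < p" unfolding r_c_s_d_def using assms(2,3) p0
    by (simp_all add: div_less_iff_less_mult mult.commute)
  have cong: "[(a + b) choose a = (if r + s < p ^ K then ((r + s) choose r) * ((c + d) choose c) else 0)] (mod p)"
    unfolding ab by (rule lucas_cong_carry[OF assms(1) rs])
  show ?thesis
  proof (cases "r + s < p ^ K")
    case True
    have "p ^ K * p \<le> p ^ K * (c + d) + (r + s)" using assms(4) ab by (simp add: algebra_simps)
    hence "p ^ K * p < p ^ K * (c + d + 1)" using True by simp
    hence "p < c + d + 1" by (simp only: mult_less_cancel1)
    hence "p \<le> c + d" by simp
    hence "p dvd ((c + d) choose c)" using prime_dvd_choose_small[OF assms(1) cd] by simp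
    thus ?thesis using cong True by (metis cong_dvd_iff dvd_mult)
  qed (use cong in \<open>simp add: cong_0_iff\<close>)
qed

lemma prime_dvd_choose_mult:
  assumes "prime p" "j \<ge> 1"
  shows "p dvd ((p * j) choose j)"
  using assms(2)
proof (induction j rule: less_induct)
  case (less j)
  have p0: "p > 0" using assms(1) prime_gt_0_nat by blast
  define j0 j1 where "j0 = j mod p" "j1 = j div p"
  have j: "j = j0 + p * j1" unfolding j0_j1_def by simp
  have "[(0 + p * j) choose (j0 + p * j1) = (0 choose j0) * (j choose j1)] (mod p)"
    by (rule lucas_cong[OF assms(1)]) (use p0 j0_j1_def in auto)
  hence c: "[(p * j) choose j = (0 choose j0) * (j choose j1)] (mod p)" using j by simp
  show ?case
  proof (cases "j0 = 0")
    case False thus ?thesis using c by (simp add: cong_0_iff binomial_eq_0)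
  next
    case True
    hence jj: "j = p * j1" using j by simp
    hence "j1 \<ge> 1" "j1 < j" using less.prems prime_gt_1_nat[OF assms(1)] by auto
    hence "p dvd ((p * j1) choose j1)" using less.IH by blast
    thus ?thesis using c jj by (metis cong_dvd_iff dvd_mult)
  qed
qed

lemma choose_prime_power_mult_cong:
  assumes "prime p"
  shows "[(p ^ v * q) choose (p ^ v) = q] (mod p)"
  using lucas_cong_power[OF assms, of 0 v 0 q 1] assms prime_gt_0_nat by simp

lemma prime_power_coprime_decomp:
  assumes "prime p" "(j::nat) \<ge> 1"
  obtains v q where "j = p ^ v * q" "\<not> p dvd q"
  using assms(2)
proof (induction j arbitrary: thesis rule: less_induct)
  case (less j)
  show ?case
  proof (cases "p dvd j")
    case False thus ?thesis using less.prems(1)[of 0 j] by simp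
  next
    case True
    then obtain j' where j': "j = p * j'" by blast
    have "j' \<ge> 1" using less.prems j' by (cases j') auto
    moreover have "j' < j" using j' prime_gt_1_nat[OF assms(1)] calculation by simp
    ultimately obtain v q where "j' = p ^ v * q" "\<not> p dvd q" using less.IH by blast
    thus ?thesis using less.prems(1)[of "Suc v" q] j' by simp
  qed
qed

section \<open>Inverses of factorials and the Frobenius map\<close>

context
  fixes p :: nat
  assumes prime: "prime p" and char: "of_nat p = (0::'a::comm_ring_1)"
begin

lemma fp_inv_mult:
  assumes "\<not> p dvd m"
  shows "(fp_inv p m :: 'a) * of_nat m = 1"
proof -
  have "coprime m p" using assms prime by (metis coprime_commute prime_imp_coprime_nat)
  then obtain k where "[m * k = 1] (mod p)" using cong_solve_coprime_nat by (metis One_nat_def)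
  hence "\<exists>k. (k * m) mod p = 1 mod p" unfolding cong_def by (metis mult.commute)
  hence "[(SOME k. (k * m) mod p = 1 mod p) * m = 1] (mod p)" unfolding cong_def by (rule someI_ex)
  from of_nat_eq_if_cong_char[OF char this] show ?thesis unfolding fp_inv_def by simp
qed

lemma fp_inv_fact_mult:
  assumes "j < p"
  shows "(fp_inv p (fact j) :: 'a) * of_nat (fact j) = 1"
  using fp_inv_mult assms prime by (simp add: prime_dvd_fact_iff)

lemma fp_inv_one [simp]: "(fp_inv p (Suc 0) :: 'a) = 1"
  using fp_inv_mult[of 1] prime_gt_1_nat[OF prime] by simp

lemma of_nat_mult_fp_inv_fact:
  assumes "1 \<le> c" "c < p"
  shows "(of_nat c :: 'a) * fp_inv p (fact c) = fp_inv p (fact (c - 1))"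
proof -
  have fc: "fact c = c * fact (c - 1)" using assms by (simp add: fact_reduce)
  have "(of_nat c :: 'a) * fp_inv p (fact c) =
      (of_nat c * fp_inv p (fact c)) * (of_nat (fact (c - 1)) * fp_inv p (fact (c - 1)))"
    using fp_inv_fact_mult[of "c - 1"] assms by (simp add: mult.commute)
  also have "\<dots> = (fp_inv p (fact c) * of_nat (fact c)) * fp_inv p (fact (c - 1))"
    by (simp add: fc ac_simps)
  finally show ?thesis using fp_inv_fact_mult[OF assms(2)] by simp
qed

lemma fp_inv_fact_mult_fp_inv_fact:
  assumes "c + d < p"
  shows "(fp_inv p (fact c) :: 'a) * fp_inv p (fact d) = of_nat ((c + d) choose c) * fp_inv p (fact (c + d))"
proof -
  have fl: "fact (c + d) = fact c * fact d * ((c + d) choose c)"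
    using binomial_fact_lemma[of c "c + d"] by simp
  have "(fp_inv p (fact c) :: 'a) * fp_inv p (fact d) =
      fp_inv p (fact c) * fp_inv p (fact d) * (of_nat (fact (c + d)) * fp_inv p (fact (c + d)))"
    using fp_inv_fact_mult[OF assms] by (simp add: mult.commute)
  also have "\<dots> = (fp_inv p (fact c) * of_nat (fact c)) * (fp_inv p (fact d) * of_nat (fact d)) *
      of_nat ((c + d) choose c) * fp_inv p (fact (c + d))"
    unfolding fl by (simp add: algebra_simps)
  finally show ?thesis using fp_inv_fact_mult[of c] fp_inv_fact_mult[of d] assms by simp
qed

lemma of_nat_choose_prime_eq_0:
  assumes "0 < k" "k < p"
  shows "(of_nat (p choose k) :: 'a) = 0"
proof -
  have "p dvd (p choose k)" using assms prime by (simp add: dvd_choose_prime)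
  thus ?thesis by (rule of_nat_eq_0_if_char_dvd[OF char])
qed

lemma char_cases:
  obtains "CHAR('a) = p" | "\<And>x :: 'a. x = 0"
proof -
  have "CHAR('a) dvd p" using char by (simp add: of_nat_eq_0_iff_char_dvd)
  moreover have "\<forall>m. m dvd p \<longrightarrow> m = 1 \<or> m = p" using prime by (simp add: prime_nat_iff)
  ultimately have "CHAR('a) = 1 \<or> CHAR('a) = p" by blast
  moreover have "(x :: 'a) = 0" if "CHAR('a) = 1" for x
  proof -
    have "(1 :: 'a) = 0" using of_nat_CHAR[where 'a='a] that by simp
    hence "x * 1 = x * 0" by (rule arg_cong)
    thus ?thesis by simp
  qed
  ultimately show thesis using that by blast
qed

lemma frobenius_add: "(a + b :: 'a) ^ p = a ^ p + b ^ p"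
proof (cases rule: char_cases)
  case 1 show ?thesis by (rule freshmans_dream) (use 1 prime in simp_all)
next
  case 2 show ?thesis by (rule trans[OF 2 2[symmetric]])
qed

lemma frobenius_sum: "(\<Sum>x\<in>S. f x :: 'a) ^ p = (\<Sum>x\<in>S. f x ^ p)"
proof (cases rule: char_cases)
  case 1 show ?thesis by (rule freshmans_dream_sum) (use 1 prime in simp_all)
next
  case 2 show ?thesis by (rule trans[OF 2 2[symmetric]])
qed

lemma neg_one_power_prime_minus_one: "((-1) ^ (p - 1) :: 'a) = 1"
proof (cases "p = 2")
  case True
  have "(1 :: 'a) + 1 = of_nat (Suc (Suc 0))" by simp
  hence "(1 :: 'a) + 1 = 0" using True char by simp
  hence "(1 :: 'a) = -1" by (rule add_eq_0_iff2[THEN iffD1])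
  have "((-1) ^ (p - 1) :: 'a) = -1" using True by simp
  also have "\<dots> = 1" by (rule sym) fact
  finally show ?thesis .
next
  case False
  have "p > 2" using False prime_ge_2_nat[OF prime] by simp
  hence "odd p" by (rule prime_odd_nat[OF prime])
  thus ?thesis using prime_gt_0_nat[OF prime] by simp
qed

end

section \<open>Derivations\<close>

lemma derivation_add: "is_derivation D \<Longrightarrow> D (a + b) = D a + D b"
  unfolding is_derivation_def by blast

lemma derivation_mult: "is_derivation D \<Longrightarrow> D (a * b) = a * D b + b * D a"
  unfolding is_derivation_def by blast

lemma derivation_zero: "is_derivation D \<Longrightarrow> D 0 = 0"
  using derivation_add[of D 0 0] by simp

lemma derivation_minus: "is_derivation D \<Longrightarrow> D (- a) = - D a"
  using derivation_add[of D a "-a"] derivation_zero[of D] by (simp add: eq_neg_iff_add_eq_0 add.commute)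

lemma derivation_diff: "is_derivation D \<Longrightarrow> D (a - b) = D a - D b"
  using derivation_add[of D a "-b"] derivation_minus[of D b] by simp

lemma derivation_one: "is_derivation D \<Longrightarrow> D 1 = 0"
  using derivation_mult[of D 1 1] by simp

lemma derivation_of_nat: "is_derivation D \<Longrightarrow> D (of_nat k) = 0"
  by (induction k) (simp_all add: derivation_zero derivation_add derivation_one)

lemma derivation_fp_inv: "is_derivation D \<Longrightarrow> D (fp_inv p m) = 0"
  unfolding fp_inv_def by (rule derivation_of_nat)

lemma derivation_neg_one_power: "is_derivation D \<Longrightarrow> D ((-1) ^ k) = 0"
  by (induction k) (simp_all add: derivation_mult derivation_minus derivation_one)

lemma derivation_sum: "is_derivation D \<Longrightarrow> D (\<Sum>x\<in>S. f x) = (\<Sum>x\<in>S. D (f x))"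
  by (induction S rule: infinite_finite_induct) (simp_all add: derivation_zero derivation_add)

lemma derivation_power: "is_derivation D \<Longrightarrow> D (a ^ n) = of_nat n * a ^ (n - 1) * D a"
proof (induction n)
  case (Suc n)
  thus ?case by (cases n) (simp_all add: derivation_mult algebra_simps)
qed (simp add: derivation_one)

lemma derivation_mult_const: "is_derivation D \<Longrightarrow> D c = 0 \<Longrightarrow> D (c * a) = c * D a"
  by (simp add: derivation_mult)

lemma derivation_mult_eq_0: "is_derivation D \<Longrightarrow> D a = 0 \<Longrightarrow> D b = 0 \<Longrightarrow> D (a * b) = 0"
  by (simp add: derivation_mult)

lemma derivation_power_eq_0: "is_derivation D \<Longrightarrow> D a = 0 \<Longrightarrow> D (a ^ n) = 0"
  by (simp add: derivation_power)

lemma derivation_prod_eq_0: "is_derivation D \<Longrightarrow> (\<And>x. x \<in> S \<Longrightarrow> D (f x) = 0) \<Longrightarrow> D (\<Prod>x\<in>S. f x) = 0"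
  by (induction S rule: infinite_finite_induct) (simp_all add: derivation_one derivation_mult)

lemma derivation_sum_eq_0: "is_derivation D \<Longrightarrow> (\<And>x. x \<in> S \<Longrightarrow> D (f x) = 0) \<Longrightarrow> D (\<Sum>x\<in>S. f x) = 0"
  by (simp add: derivation_sum)

lemma derivation_funpow_add: "is_derivation D \<Longrightarrow> (D ^^ m) (a + b) = (D ^^ m) a + (D ^^ m) b"
  by (induction m) (simp_all add: derivation_add)

lemma derivation_funpow_zero: "is_derivation D \<Longrightarrow> (D ^^ m) 0 = 0"
  by (induction m) (simp_all add: derivation_zero)

lemma derivation_funpow_diff: "is_derivation D \<Longrightarrow> (D ^^ m) (a - b) = (D ^^ m) a - (D ^^ m) b"
  by (induction m) (simp_all add: derivation_diff)

lemma derivation_funpow_sum: "is_derivation D \<Longrightarrow> (D ^^ m) (\<Sum>x\<in>S. f x) = (\<Sum>x\<in>S. (D ^^ m) (f x))"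
  by (induction m) (simp_all add: derivation_sum)

lemma derivation_funpow_mult_const:
  "is_derivation D \<Longrightarrow> D c = 0 \<Longrightarrow> (D ^^ m) (c * a) = c * (D ^^ m) a"
  by (induction m) (simp_all add: derivation_mult_const)

lemma funpow_apply_commute:
  assumes "f \<circ> g = g \<circ> f"
  shows "f ((g ^^ m) x) = (g ^^ m) (f x)"
  by (induction m) (use fun_cong[OF assms] in simp_all)

lemma derivation_funpow_eq_0_if_commute:
  assumes "is_derivation D" "D' \<circ> D = D \<circ> D'" "D' x = 0"
  shows "D' ((D ^^ m) x) = 0"
  using funpow_apply_commute[OF assms(2)] assms by (simp add: derivation_funpow_zero)

lemma pascal_convolution_step:
  fixes A B :: "nat \<Rightarrow> 'a::comm_ring_1"
  shows "(\<Sum>k\<le>n. of_nat (n choose k) * A (k+1) * B (n-k)) +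
      (\<Sum>k\<le>n. of_nat (n choose k) * A k * B (n - k + 1)) =
    (\<Sum>k\<le>n+1. of_nat (n + 1 choose k) * A k * B (n + 1 - k))"
proof -
  have "(\<Sum>k\<le>n. of_nat (n choose k) * A (k+1) * B (n-k)) +
      (\<Sum>k\<le>n. of_nat (n choose k) * A k * B (n - k + 1)) =
      (\<Sum>k\<le>n. of_nat (n choose k) * A k * B (n + 1 - k)) +
      (\<Sum>k=1..n+1. of_nat (n choose (k - 1)) * A k * B (n + 1 - k))"
    by (simp add: atMost_atLeast0 sum.shift_bounds_cl_Suc_ivl Suc_diff_le field_simps del: sum.cl_ivl_Suc)
  also have "\<dots> = A 0 * B (n + 1) +
      (\<Sum>k=1..n. of_nat (n choose k) * A k * B (n + 1 - k)) + (A (n + 1) * B 0 +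
      (\<Sum>k=1..n. of_nat (n choose (k - 1)) * A k * B (n + 1 - k)))"
      using sum.nat_ivl_Suc' [of 1 n "\<lambda>k. of_nat (n choose (k-1)) * A k * B (n + 1 - k)"]
    by (simp add: sum.atLeast_Suc_atMost atMost_atLeast0)
  also have "\<dots> = A (n + 1) * B 0 + A 0 * B (n + 1) +
      (\<Sum>k=1..n. of_nat (n + 1 choose k) * A k * B (n + 1 - k))"
    by (auto simp add: field_simps sum.distrib [symmetric] choose_reduce_nat)
  also have "\<dots> = (\<Sum>k\<le>n+1. of_nat (n + 1 choose k) * A k * B (n + 1 - k))"
    using atMost_atLeast0 by (simp add: sum.atLeast_Suc_atMost field_simps)
  finally show ?thesis .
qed

lemma derivation_funpow_mult:
  assumes D: "is_derivation D"
  shows "(D ^^ n) (a * b) = (\<Sum>k\<le>n. of_nat (n choose k) * (D ^^ k) a * (D ^^ (n - k)) b)"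
proof (induction n)
  case (Suc n)
  have "(D ^^ Suc n) (a * b) = D (\<Sum>k\<le>n. of_nat (n choose k) * (D ^^ k) a * (D ^^ (n - k)) b)"
    using Suc by simp
  also have "\<dots> = (\<Sum>k\<le>n. of_nat (n choose k) * (D ^^ (k + 1)) a * (D ^^ (n - k)) b) +
      (\<Sum>k\<le>n. of_nat (n choose k) * (D ^^ k) a * (D ^^ (n - k + 1)) b)"
    by (simp add: derivation_sum[OF D] sum.distrib[symmetric] derivation_mult[OF D]
        derivation_of_nat[OF D] algebra_simps)
  also have "\<dots> = (\<Sum>k\<le>n+1. of_nat (n + 1 choose k) * (D ^^ k) a * (D ^^ (n + 1 - k)) b)"
    by (rule pascal_convolution_step)
  finally show ?case by simp
qed simp

lemma derivation_funpow_prime: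
  assumes prime: "prime p" and char: "of_nat p = (0::'a::comm_ring_1)" and D: "is_derivation (D :: 'a \<Rightarrow> 'a)"
  shows "is_derivation (D ^^ p)"
proof -
  have "(D ^^ p) (a * b) = a * (D ^^ p) b + b * (D ^^ p) a" for a b
  proof -
    have "(D ^^ p) (a * b) = (\<Sum>k\<in>{0, p}. of_nat (p choose k) * (D ^^ k) a * (D ^^ (p - k)) b)"
      unfolding derivation_funpow_mult[OF D]
      by (intro sum.mono_neutral_right) (auto simp: of_nat_choose_prime_eq_0[OF prime char])
    thus ?thesis using prime_gt_0_nat[OF prime] by (simp add: mult.commute)
  qed
  thus ?thesis unfolding is_derivation_def using derivation_funpow_add[OF D] by blast
qed

lemma derivation_funpow_prime_power:
  assumes prime: "prime p" and char: "of_nat p = (0::'a::comm_ring_1)" and D: "is_derivation (D :: 'a \<Rightarrow> 'a)"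
  shows "is_derivation (D ^^ (p ^ k))"
proof (induction k)
  case (Suc k)
  have "D ^^ (p ^ Suc k) = (D ^^ (p ^ k)) ^^ p" by (simp add: funpow_mult mult.commute)
  thus ?case using derivation_funpow_prime[OF prime char Suc] by simp
qed (use D in simp)

section \<open>Iterative sequences and products of divided powers\<close>

lemma below_ppow_enat [simp]: "below_ppow p (enat K) a \<longleftrightarrow> a < p ^ K"
  by (simp add: below_ppow_def)

lemma below_ppow_infinity [simp]: "below_ppow p \<infinity> a"
  by (simp add: below_ppow_def)

lemma below_ppow_mono: "below_ppow p e a \<Longrightarrow> b \<le> a \<Longrightarrow> below_ppow p e b"
  unfolding below_ppow_def by (cases e) auto

lemma below_ppow_zero: "p > 0 \<Longrightarrow> below_ppow p e 0"
  unfolding below_ppow_def by (cases e) auto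

lemma below_ppow_ppow_iff: "p > 1 \<Longrightarrow> below_ppow p e (p ^ k) \<longleftrightarrow> enat k < e"
  unfolding below_ppow_def by (cases e) (auto simp: power_strict_increasing_iff)

text \<open>The univariate form of \<open>is_iterative\<close>, for the restriction of a descent to one axis.\<close>

definition iterative_seq :: "nat \<Rightarrow> enat \<Rightarrow> (nat \<Rightarrow> 'a::comm_ring_1) \<Rightarrow> bool" where
  "iterative_seq p e X \<longleftrightarrow> (\<forall>a b. below_ppow p e a \<longrightarrow> below_ppow p e b \<longrightarrow>
     X a * X b = (if below_ppow p e (a + b) then of_nat ((a + b) choose a) * X (a + b) else 0))"

text \<open>\<open>divided_power p w c\<close> is \<open>w\<^sup>c / c!\<close>; it is only meaningful for \<open>c < p\<close>, where \<open>c!\<close> is a unit.\<close>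

definition divided_power :: "nat \<Rightarrow> 'a::comm_ring_1 \<Rightarrow> nat \<Rightarrow> 'a" where
  "divided_power p w c = w ^ c * fp_inv p (fact c)"

definition digit_prod :: "nat \<Rightarrow> nat \<Rightarrow> (nat \<Rightarrow> 'a::comm_ring_1) \<Rightarrow> nat \<Rightarrow> 'a" where
  "digit_prod p K u i = (\<Prod>k<K. divided_power p (u k) (i div p ^ k mod p))"

definition digit_seq :: "nat \<Rightarrow> (nat \<Rightarrow> 'a::comm_ring_1) \<Rightarrow> nat \<Rightarrow> 'a" where
  "digit_seq p u i = digit_prod p (Suc i) u i"

lemma xseq_eq_digit_seq: "xseq p D y = digit_seq p (xpp p D y)"
  by (auto simp: xseq_def digit_seq_def digit_prod_def divided_power_def lessThan_Suc_atMost)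

lemma less_power_self: "1 < (p :: nat) \<Longrightarrow> i < p ^ i"
  using less_exp[of i] power_mono[of 2 p i] by linarith

lemma mod_div_add_mult:
  fixes r P c :: nat
  shows "r < P \<Longrightarrow> (r + P * c) mod P = r" "r < P \<Longrightarrow> (r + P * c) div P = c"
  by simp_all

context
  fixes p :: nat
  assumes prime: "prime p" and char: "of_nat p = (0::'a::comm_ring_1)"
begin

lemma divided_power_zero [simp]: "divided_power p (w :: 'a) 0 = 1"
  by (simp add: divided_power_def fp_inv_one[OF prime char])

lemma divided_power_one [simp]: "divided_power p (w :: 'a) (Suc 0) = w"
  by (simp add: divided_power_def fp_inv_one[OF prime char])

lemma divided_power_mult:
  assumes w: "(w :: 'a) ^ p = 0" and cd: "c < p" "d < p"
  shows "divided_power p w c * divided_power p w d =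
    (if c + d < p then of_nat ((c + d) choose c) * divided_power p w (c + d) else 0)"
proof (cases "c + d < p")
  case False
  hence "w ^ (c + d) = w ^ p * w ^ (c + d - p)" by (simp flip: power_add)
  hence "w ^ c * w ^ d = 0" using w by (simp flip: power_add)
  moreover have "divided_power p w c * divided_power p w d = (w ^ c * w ^ d) * (fp_inv p (fact c) * fp_inv p (fact d))"
    by (simp add: divided_power_def ac_simps)
  ultimately show ?thesis using False by simp
next
  case True
  thus ?thesis
    by (simp add: divided_power_def power_add fp_inv_fact_mult_fp_inv_fact[OF prime char] algebra_simps)
qed

lemma digit_prod_eq:
  assumes "i < p ^ K" "K \<le> M"
  shows "digit_prod p M (u :: nat \<Rightarrow> 'a) i = digit_prod p K u i"
proof -
  have "digit_prod p M u i = digit_prod p K u i * (\<Prod>k\<in>{K..<M}. divided_power p (u k) (i div p ^ k mod p))"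
    unfolding digit_prod_def using assms(2) by (subst prod.union_disjoint[symmetric]) (auto intro: prod.cong)
  also have "(\<Prod>k\<in>{K..<M}. divided_power p (u k) (i div p ^ k mod p)) = 1"
  proof (rule prod.neutral, rule ballI)
    fix k assume "k \<in> {K..<M}"
    hence "p ^ K \<le> p ^ k" using prime_gt_0_nat[OF prime] by (simp add: power_increasing)
    thus "divided_power p (u k) (i div p ^ k mod p) = 1" using assms(1) by simp
  qed
  finally show ?thesis by simp
qed

lemma digit_seq_eq_digit_prod:
  assumes "i < p ^ K"
  shows "digit_seq p (u :: nat \<Rightarrow> 'a) i = digit_prod p K u i"
proof -
  have "digit_seq p u i = digit_prod p (max K (Suc i)) u i"
    unfolding digit_seq_def by (rule digit_prod_eq[symmetric]) (use less_power_self[OF prime_gt_1_nat[OF prime], of "Suc i"] in auto)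
  also have "\<dots> = digit_prod p K u i" by (rule digit_prod_eq[OF assms]) simp
  finally show ?thesis .
qed

lemma digit_prod_zero_index [simp]: "digit_prod p K (u :: nat \<Rightarrow> 'a) 0 = 1"
  by (simp add: digit_prod_def)

lemma digit_prod_Suc:
  assumes "i < p ^ Suc K"
  shows "digit_prod p (Suc K) (u :: nat \<Rightarrow> 'a) i =
    digit_prod p K u (i mod p ^ K) * divided_power p (u K) (i div p ^ K)"
proof -
  have digits: "(i mod p ^ K) div p ^ k mod p = i div p ^ k mod p" if "k < K" for k
  proof -
    have "p ^ K = p ^ k * p ^ (K - k)" using that by (simp flip: power_add)
    hence "i mod p ^ K = p ^ k * (i div p ^ k mod p ^ (K - k)) + i mod p ^ k"
      by (simp add: mod_mult2_eq)
    hence "(i mod p ^ K) div p ^ k = i div p ^ k mod p ^ (K - k)" using prime_gt_0_nat[OF prime] by simp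
    thus ?thesis using that by (simp add: mod_mod_cancel)
  qed
  have "i div p ^ K < p" using assms prime_gt_0_nat[OF prime] by (simp add: div_less_iff_less_mult mult.commute)
  thus ?thesis unfolding digit_prod_def using digits by simp
qed

lemma digit_seq_zero_index [simp]: "digit_seq p (u :: nat \<Rightarrow> 'a) 0 = 1"
  by (simp add: digit_seq_def)

lemma digit_seq_prime_power: "digit_seq p (u :: nat \<Rightarrow> 'a) (p ^ k) = u k"
proof -
  have lt: "p ^ k < p ^ Suc k" using prime_gt_1_nat[OF prime] by simp
  show ?thesis
    using digit_seq_eq_digit_prod[OF lt] digit_prod_Suc[OF lt] prime_gt_0_nat[OF prime] by simp
qed

lemma iterative_seq_extend:
  assumes X: "iterative_seq p (enat K) (X :: nat \<Rightarrow> 'a)" and w: "w ^ p = 0"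
  shows "iterative_seq p (enat (Suc K)) (\<lambda>i. X (i mod p ^ K) * divided_power p w (i div p ^ K))"
  unfolding iterative_seq_def below_ppow_enat
proof (intro allI impI)
  fix a b :: nat
  assume a: "a < p ^ Suc K" and b: "b < p ^ Suc K"
  define r c s d where "r = a mod p ^ K" "c = a div p ^ K" "s = b mod p ^ K" "d = b div p ^ K"
  have ab: "a = r + p ^ K * c" "b = s + p ^ K * d" unfolding r_c_s_d_def by simp_all
  have rs: "r < p ^ K" "s < p ^ K" unfolding r_c_s_d_def using prime_gt_0_nat[OF prime] by simp_all
  have cd: "c < p" "d < p" unfolding r_c_s_d_def using a b prime_gt_0_nat[OF prime]
    by (simp_all add: div_less_iff_less_mult mult.commute)
  have binom: "(of_nat ((a + b) choose a) :: 'a) =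
      (if r + s < p ^ K then of_nat ((r + s) choose r) * of_nat ((c + d) choose c) else 0)"
    using of_nat_eq_if_cong_char[OF char lucas_cong_carry[OF prime rs, of c d]] ab by simp
  have XX: "X r * X s = (if r + s < p ^ K then of_nat ((r + s) choose r) * X (r + s) else 0)"
    using X rs unfolding iterative_seq_def by simp
  have WW: "divided_power p w c * divided_power p w d =
      (if c + d < p then of_nat ((c + d) choose c) * divided_power p w (c + d) else 0)"
    by (rule divided_power_mult[OF w cd])
  have "X (a mod p ^ K) * divided_power p w (a div p ^ K) * (X (b mod p ^ K) * divided_power p w (b div p ^ K)) =
      (X r * X s) * (divided_power p w c * divided_power p w d)"
    by (simp add: r_c_s_d_def[symmetric] ac_simps)
  also have "\<dots> = (if a + b < p ^ Suc K
      then of_nat ((a + b) choose a) * (X ((a + b) mod p ^ K) * divided_power p w ((a + b) div p ^ K)) else 0)"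
  proof (cases "r + s < p ^ K")
    case True
    have e: "a + b = (r + s) + p ^ K * (c + d)" using ab by (simp add: algebra_simps)
    hence "(a + b) mod p ^ K = r + s" "(a + b) div p ^ K = c + d" using True by (simp_all only: mod_div_add_mult)
    moreover have "a + b < p ^ Suc K \<longleftrightarrow> c + d < p"
    proof
      assume "a + b < p ^ Suc K"
      moreover have "p ^ K * (c + d) \<le> a + b" using e by simp
      ultimately have "p ^ K * (c + d) < p ^ K * p" by (simp only: power_Suc2)
      thus "c + d < p" using mult_less_cancel1 by blast
    next
      assume "c + d < p"
      hence "p ^ K * (c + d + 1) \<le> p ^ K * p" by (intro mult_le_mono2) simp
      thus "a + b < p ^ Suc K" using e True by (simp add: algebra_simps)
    qed
    ultimately show ?thesis unfolding XX WW using binom True by (simp add: ac_simps)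
  next
    case False
    thus ?thesis unfolding XX using binom by simp
  qed
  finally show "X (a mod p ^ K) * divided_power p w (a div p ^ K) * (X (b mod p ^ K) * divided_power p w (b div p ^ K)) =
      (if a + b < p ^ Suc K then of_nat ((a + b) choose a) * (X ((a + b) mod p ^ K) * divided_power p w ((a + b) div p ^ K)) else 0)" .
qed

lemma iterative_digit_prod:
  assumes "\<forall>k<K. (u k :: 'a) ^ p = 0"
  shows "iterative_seq p (enat K) (digit_prod p K u)"
  using assms
proof (induction K)
  case 0
  show ?case unfolding iterative_seq_def digit_prod_def by simp
next
  case (Suc K)
  have "iterative_seq p (enat (Suc K)) (\<lambda>i. digit_prod p K u (i mod p ^ K) * divided_power p (u K) (i div p ^ K))"
    using Suc by (intro iterative_seq_extend) simp_all
  thus ?case unfolding iterative_seq_def below_ppow_enat using digit_prod_Suc by simp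
qed

lemma iterative_digit_seq:
  assumes "\<forall>k. enat k < e \<longrightarrow> (u k :: 'a) ^ p = 0"
  shows "iterative_seq p e (digit_seq p u)"
  unfolding iterative_seq_def
proof (intro allI impI)
  fix a b assume a: "below_ppow p e a" and b: "below_ppow p e b"
  obtain K where K: "enat K \<le> e" "a < p ^ K" "b < p ^ K" "below_ppow p e (a + b) \<longleftrightarrow> a + b < p ^ K"
  proof (cases e)
    case (enat m) thus ?thesis using that[of m] a b by simp
  next
    case infinity thus ?thesis using that[of "a + b"] less_power_self[OF prime_gt_1_nat[OF prime], of "a + b"] by simp
  qed
  have "iterative_seq p (enat K) (digit_prod p K u)"
    using assms K(1) by (intro iterative_digit_prod) (meson enat_ord_simps(2) order_less_le_trans)
  thus "digit_seq p u a * digit_seq p u b =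
      (if below_ppow p e (a + b) then of_nat ((a + b) choose a) * digit_seq p u (a + b) else 0)"
    unfolding iterative_seq_def using K digit_seq_eq_digit_prod by simp
qed

lemma prime_dvd_choose_if_not_below:
  assumes "below_ppow p e a" "below_ppow p e b" "\<not> below_ppow p e (a + b)"
  shows "p dvd ((a + b) choose a)"
proof -
  obtain m where m: "a < p ^ m" "b < p ^ m" "p ^ m \<le> a + b"
    using assms by (cases e) auto
  moreover from m obtain K where "m = Suc K" by (cases m) auto
  ultimately show ?thesis using prime_dvd_choose_overflow[OF prime] by simp
qed

lemma iterative_seq_mult_last_eq_0:
  assumes "iterative_seq p (enat K) (X :: nat \<Rightarrow> 'a)" "0 < r" "r < p ^ K"
  shows "X r * X (p ^ K - 1) = 0"
proof -
  have "p ^ K - 1 < p ^ K" using prime_gt_0_nat[OF prime] by simp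
  thus ?thesis using assms unfolding iterative_seq_def below_ppow_enat by fastforce
qed

lemma iterative_seq_pow_prime:
  assumes X: "iterative_seq p e (X :: nat \<Rightarrow> 'a)" and j: "j \<ge> 1" "below_ppow p e j"
  shows "X j ^ p = 0"
proof -
  have pw: "\<exists>c. X j ^ Suc t = c * (if below_ppow p e (Suc t * j) then X (Suc t * j) else 0)" for t
  proof (induction t)
    case 0 show ?case by (intro exI[of _ 1]) (use j in simp)
  next
    case (Suc t)
    then obtain c where c: "X j ^ Suc t = c * (if below_ppow p e (Suc t * j) then X (Suc t * j) else 0)" by blast
    show ?case
    proof (cases "below_ppow p e (Suc t * j)")
      case False
      hence "\<not> below_ppow p e (Suc (Suc t) * j)" using below_ppow_mono by fastforce
      thus ?thesis using c False by simp
    next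
      case True
      have "X (Suc t * j) * X j = (if below_ppow p e (Suc t * j + j)
          then of_nat ((Suc t * j + j) choose (Suc t * j)) * X (Suc t * j + j) else 0)"
        using X True j unfolding iterative_seq_def by blast
      hence "X j ^ Suc (Suc t) = c * of_nat ((Suc (Suc t) * j) choose (Suc t * j)) *
          (if below_ppow p e (Suc (Suc t) * j) then X (Suc (Suc t) * j) else 0)"
        using c True by (simp add: algebra_simps)
      thus ?thesis by blast
    qed
  qed
  have "Suc (p - 2) = p - 1" using prime_gt_1_nat[OF prime] by simp
  then obtain c where c: "X j ^ (p - 1) = c * (if below_ppow p e ((p - 1) * j) then X ((p - 1) * j) else 0)"
    using pw[of "p - 2"] by metis
  have pj: "(p - 1) * j + j = p * j" using prime_gt_1_nat[OF prime] by (simp add: algebra_simps)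
  have "(p * j) choose ((p - 1) * j) = (p * j) choose j"
    using binomial_symmetric[of "(p - 1) * j" "p * j"] prime_gt_1_nat[OF prime] by (simp add: diff_mult_distrib)
  hence "(of_nat ((p * j) choose ((p - 1) * j)) :: 'a) = 0"
    using of_nat_eq_0_if_char_dvd[OF char prime_dvd_choose_mult[OF prime j(1)]] by simp
  hence "X ((p - 1) * j) * X j = 0" if "below_ppow p e ((p - 1) * j)"
    using X that j pj unfolding iterative_seq_def by (metis mult_zero_left)
  moreover have "X j ^ p = X j ^ (p - 1) * X j" using prime_gt_0_nat[OF prime] by (simp flip: power_Suc2)
  ultimately show ?thesis using c by (auto simp: mult.assoc)
qed

lemma digit_seq_eq_0_if_derivation:
  assumes D: "is_derivation D" and u: "\<forall>k. enat k < e \<longrightarrow> D (u k) = 0" and j: "below_ppow p e j"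
  shows "D (digit_seq p (u :: nat \<Rightarrow> 'a) j) = 0"
  unfolding digit_seq_def digit_prod_def
proof (rule derivation_prod_eq_0[OF D])
  fix k assume "k \<in> {..<Suc j}"
  show "D (divided_power p (u k) (j div p ^ k mod p)) = 0"
  proof (cases "j div p ^ k mod p = 0")
    case False
    hence "p ^ k \<le> j" using div_eq_0_iff prime_gt_0_nat[OF prime] by (metis mod_0 not_le power_eq_0_iff)
    hence "below_ppow p e (p ^ k)" using j below_ppow_mono by blast
    hence "D (u k) = 0" using u below_ppow_ppow_iff[OF prime_gt_1_nat[OF prime]] by blast
    thus ?thesis unfolding divided_power_def
      by (intro derivation_mult_eq_0[OF D] derivation_power_eq_0[OF D] derivation_fp_inv[OF D])
  qed (simp add: derivation_one[OF D])
qed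

end

section \<open>Descent sequences of a single derivation\<close>

definition descent_seq :: "nat \<Rightarrow> ('a::comm_ring_1 \<Rightarrow> 'a) \<Rightarrow> enat \<Rightarrow> (nat \<Rightarrow> 'a) \<Rightarrow> bool" where
  "descent_seq p D e X \<longleftrightarrow> X 0 = 1 \<and>
     (\<forall>m j. below_ppow p e j \<longrightarrow> (D ^^ m) (X j) = (if m \<le> j then X (j - m) else 0))"

lemma descent_seqI:
  assumes D: "is_derivation D" and X0: "X 0 = 1"
    and step: "\<And>j. below_ppow p e j \<Longrightarrow> 1 \<le> j \<Longrightarrow> D (X j) = X (j - 1)"
  shows "descent_seq p D e X"
  unfolding descent_seq_def
proof (intro conjI X0 allI impI)
  fix m j assume j: "below_ppow p e j"
  show "(D ^^ m) (X j) = (if m \<le> j then X (j - m) else 0)"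
  proof (induction m)
    case (Suc m)
    show ?case
    proof (cases "m < j")
      case True
      have "below_ppow p e (j - m)" using j below_ppow_mono by simp
      thus ?thesis using Suc True step[of "j - m"] by simp
    next
      case False
      thus ?thesis using Suc X0 by (auto simp: derivation_one[OF D] derivation_zero[OF D])
    qed
  qed simp
qed

lemma descent_seq_step:
  assumes "descent_seq p D e X" "below_ppow p e j" "1 \<le> j"
  shows "D (X j) = X (j - 1)"
proof -
  have "(D ^^ 1) (X j) = (if 1 \<le> j then X (j - 1) else 0)"
    using assms(1,2) unfolding descent_seq_def by blast
  thus ?thesis using assms(3) by simp
qed

lemma descent_seq_cong:
  assumes "p > 0" "\<And>j. below_ppow p e j \<Longrightarrow> X j = Y j"
  shows "descent_seq p D e X \<longleftrightarrow> descent_seq p D e Y"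
proof -
  have "X (j - m) = Y (j - m)" if "below_ppow p e j" for j m
    using assms(2) below_ppow_mono[OF that, of "j - m"] by simp
  thus ?thesis unfolding descent_seq_def using assms below_ppow_zero[OF assms(1)] by auto
qed

locale char_p_derivation =
  fixes p :: nat and D :: "'a::comm_ring_1 \<Rightarrow> 'a"
  assumes prime: "prime p" and char: "of_nat p = (0::'a)" and derivation: "is_derivation D"
begin

lemma below_ppow_bound:
  assumes "below_ppow p e j"
  obtains K where "enat K \<le> e" "j < p ^ K"
proof (cases e)
  case (enat M) thus ?thesis using that[of M] assms by simp
next
  case infinity thus ?thesis using that less_power_self[OF prime_gt_1_nat[OF prime], of j] by simp
qed

lemma derivation_divided_power:
  assumes "c < p"
  shows "D (divided_power p w c) = (if c = 0 then 0 else divided_power p w (c - 1) * D w)"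
proof (cases "c = 0")
  case False
  have "D (divided_power p w c) = (of_nat c * fp_inv p (fact c)) * w ^ (c - 1) * D w"
    unfolding divided_power_def
    by (simp add: derivation_mult[OF derivation] derivation_fp_inv[OF derivation]
        derivation_power[OF derivation] ac_simps)
  thus ?thesis using False assms
    by (simp add: of_nat_mult_fp_inv_fact[OF prime char] divided_power_def ac_simps)
qed (simp add: derivation_one[OF derivation] divided_power_zero[OF prime char])

text \<open>Appending a top digit to a descent sequence below \<open>p\<^sup>K\<close>: the digit carries when the low part
  reaches \<open>0\<close>, which is where \<open>D w = X (p\<^sup>K - 1)\<close> enters.\<close>

lemma descent_seq_extend:
  assumes X: "descent_seq p D (enat K) X" and XI: "iterative_seq p (enat K) X"
    and w: "D w = X (p ^ K - 1)"
  shows "descent_seq p D (enat (Suc K)) (\<lambda>i. X (i mod p ^ K) * divided_power p w (i div p ^ K))"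
proof (rule descent_seqI[OF derivation])
  show "X (0 mod p ^ K) * divided_power p w (0 div p ^ K) = 1"
    using X by (simp add: descent_seq_def divided_power_zero[OF prime char])
next
  fix i assume i: "below_ppow p (enat (Suc K)) i" "1 \<le> i"
  define P where "P = p ^ K"
  have P0: "P > 0" unfolding P_def using prime_gt_0_nat[OF prime] by simp
  define r c where "r = i mod P" "c = i div P"
  have ir: "i = r + P * c" and rP: "r < P" unfolding r_c_def using P0 by simp_all
  have cp: "c < p" unfolding r_c_def P_def using i prime_gt_0_nat[OF prime]
    by (simp add: div_less_iff_less_mult mult.commute)
  have Dw: "D (divided_power p w c) = (if c = 0 then 0 else divided_power p w (c - 1) * X (P - 1))"
    using derivation_divided_power[OF cp] w unfolding P_def by simp
  have "D (X r * divided_power p w c) = X ((i - 1) mod P) * divided_power p w ((i - 1) div P)"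
  proof (cases "r = 0")
    case False
    have "X r * X (P - 1) = 0"
      using iterative_seq_mult_last_eq_0[OF prime char XI] False rP unfolding P_def by simp
    moreover have "i - 1 = (r - 1) + P * c" using ir False by simp
    hence "(i - 1) mod P = r - 1" "(i - 1) div P = c" using rP by simp_all
    moreover have "X r * D (divided_power p w c) = 0"
    proof (cases "c = 0")
      case False
      hence "X r * D (divided_power p w c) = (X r * X (P - 1)) * divided_power p w (c - 1)"
        using Dw by (simp add: ac_simps)
      thus ?thesis using \<open>X r * X (P - 1) = 0\<close> by simp
    qed (use Dw in simp)
    ultimately show ?thesis
      using descent_seq_step[OF X, of r] rP False unfolding P_def
      by (simp add: derivation_mult[OF derivation] mult.commute)
  next
    case True
    hence c0: "c \<noteq> 0" using ir i(2) by auto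
    have "i - 1 = (P - 1) + P * (c - 1)" using ir True c0 P0 by (cases c) simp_all
    moreover have "P - 1 < P" using P0 by simp
    ultimately have "(i - 1) mod P = P - 1" "(i - 1) div P = c - 1" by (simp_all only: mod_div_add_mult)
    thus ?thesis using True X Dw c0
      by (simp add: descent_seq_def derivation_mult[OF derivation] derivation_one[OF derivation] ac_simps)
  qed
  thus "D (X (i mod p ^ K) * divided_power p w (i div p ^ K)) =
      X ((i - 1) mod p ^ K) * divided_power p w ((i - 1) div p ^ K)"
    unfolding r_c_def P_def .
qed

end

section \<open>The construction\<close>

lemma xtab_eq_xpp: "l \<le> k \<Longrightarrow> xtab p D y k l = xpp p D y l"
proof (induction k arbitrary: l)
  case (Suc k)
  show ?case
  proof (cases "l = Suc k")
    case False
    hence "l \<le> k" using Suc.prems by simp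
    thus ?thesis using False Suc.IH by (simp add: Let_def)
  qed (simp add: xpp_def)
qed (simp add: xpp_def)

lemma xpp_0 [simp]: "xpp p D y 0 = y 0"
  by (simp add: xpp_def)

text \<open>The map \<open>\<phi>\<^sub>k\<close> of the construction is \<open>phi p (D ^^ p\<^sup>k) (x\<^sup>[\<^sup>p\<^sup>\<^sup>k\<^sup>])\<close>.\<close>

definition phi :: "nat \<Rightarrow> ('a::comm_ring_1 \<Rightarrow> 'a) \<Rightarrow> 'a \<Rightarrow> 'a \<Rightarrow> 'a" where
  "phi p E w z = (\<Sum>j<p. (-1) ^ j * w ^ j * fp_inv p (fact j) * (E ^^ j) z)"

lemma xpp_Suc: "xpp p D y (Suc k) = (-1) ^ (p - 1) * (D ^^ (p ^ k - 1))
   ((\<Prod>l<k. divided_power p (xpp p D y l) (p - 1)) * phi p (D ^^ p ^ k) (xpp p D y k) (y (Suc k)))"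
proof -
  have "xpp p D y (Suc k) = xtab p D y (Suc k) (Suc k)" by (simp only: xpp_def)
  also have "\<dots> = (-1) ^ (p - 1) * (D ^^ (p ^ k - 1))
     ((\<Prod>l<k. xtab p D y k l ^ (p - 1) * fp_inv p (fact (p - 1))) *
      (\<Sum>j<p. (-1) ^ j * xtab p D y k k ^ j * fp_inv p (fact j) * (D ^^ (p ^ k * j)) (y (Suc k))))"
    by (simp add: Let_def)
  finally show ?thesis
    by (simp add: xtab_eq_xpp divided_power_def phi_def funpow_mult)
qed

context char_p_derivation
begin

text \<open>The terms of \<open>D (phi p D w z)\<close> telescope, since \<open>D w = 1\<close> turns \<open>D (w\<^sup>j/j!)\<close> into \<open>w\<^sup>j\<^sup>-\<^sup>1/(j-1)!\<close>.\<close>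

lemma derivation_phi:
  assumes Dw: "D w = 1"
  shows "D (phi p D w z) = divided_power p w (p - 1) * (D ^^ p) z"
proof -
  define T where "T j = (if j = 0 then 0 else (-1) ^ (j - 1) * divided_power p w (j - 1) * (D ^^ j) z)" for j
  have "D ((-1) ^ j * w ^ j * fp_inv p (fact j) * (D ^^ j) z) = T (Suc j) - T j" if j: "j < p" for j
  proof -
    have c0: "D ((-1) ^ j * fp_inv p (fact j)) = 0"
      by (intro derivation_mult_eq_0[OF derivation] derivation_neg_one_power[OF derivation]
          derivation_fp_inv[OF derivation])
    have "D ((-1) ^ j * w ^ j * fp_inv p (fact j) * (D ^^ j) z) =
        ((-1) ^ j * fp_inv p (fact j)) * D (w ^ j * (D ^^ j) z)"
      using derivation_mult_const[OF derivation c0, of "w ^ j * (D ^^ j) z"] by (simp add: ac_simps)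
    also have "\<dots> = (-1) ^ j * divided_power p w j * (D ^^ Suc j) z +
        (-1) ^ j * (of_nat j * fp_inv p (fact j)) * w ^ (j - 1) * (D ^^ j) z"
      using Dw by (simp add: derivation_mult[OF derivation] derivation_power[OF derivation]
          divided_power_def algebra_simps)
    also have "\<dots> = T (Suc j) - T j"
    proof (cases j)
      case (Suc i)
      thus ?thesis using j of_nat_mult_fp_inv_fact[OF prime char, of j]
        by (simp add: T_def divided_power_def algebra_simps)
    qed (simp add: T_def)
    finally show ?thesis .
  qed
  hence "D (phi p D w z) = (\<Sum>j<p. T (Suc j) - T j)"
    unfolding phi_def by (simp add: derivation_sum[OF derivation])
  also have "\<dots> = T p - T 0" by (rule sum_lessThan_telescope)
  also have "\<dots> = divided_power p w (p - 1) * (D ^^ p) z"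
    using prime_gt_0_nat[OF prime] neg_one_power_prime_minus_one[OF prime char] by (simp add: T_def)
  finally show ?thesis .
qed

lemma phi_pow_prime:
  assumes "(w :: 'a) ^ p = 0" "z ^ p = 0"
  shows "phi p E w z ^ p = 0"
proof -
  have "((-1) ^ j * w ^ j * fp_inv p (fact j) * (E ^^ j) z) ^ p = 0" for j
  proof (cases j)
    case 0 thus ?thesis using assms(2) by (simp add: power_mult_distrib)
  next
    case (Suc i)
    have "(w ^ j) ^ p = (w ^ p) ^ j" by (metis power_mult mult.commute)
    hence "(w ^ j) ^ p = 0" using assms(1) Suc by simp
    thus ?thesis by (simp only: power_mult_distrib mult_zero_left mult_zero_right)
  qed
  thus ?thesis unfolding phi_def by (simp add: frobenius_sum[OF prime char])
qed

lemma funpow_mult_pow_prime: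
  assumes a: "\<And>m. m < N \<Longrightarrow> ((D ^^ m) a) ^ p = 0" and b: "b ^ p = 0"
  shows "((D ^^ N) (a * b)) ^ p = 0"
proof -
  have "(of_nat (N choose m) * (D ^^ m) a * (D ^^ (N - m)) b) ^ p = 0" if "m \<le> N" for m
    using that a[of m] b by (cases "m = N") (simp_all add: power_mult_distrib)
  thus ?thesis
    unfolding derivation_funpow_mult[OF derivation] frobenius_sum[OF prime char] by (intro sum.neutral) simp
qed

lemma digit_prod_prime_power_minus_one:
  "digit_prod p k u (p ^ k - 1) = (\<Prod>l<k. divided_power p (u l :: 'a) (p - 1))"
proof (induction k)
  case (Suc k)
  have P0: "p ^ k > 0" using prime_gt_0_nat[OF prime] by simp
  have "p ^ Suc k - 1 = (p ^ k - 1) + p ^ k * (p - 1)"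
    using P0 prime_gt_0_nat[OF prime] by (cases p) (simp_all add: algebra_simps)
  moreover have "p ^ k - 1 < p ^ k" using prime_gt_0_nat[OF prime] by simp
  ultimately have "(p ^ Suc k - 1) mod p ^ k = p ^ k - 1" "(p ^ Suc k - 1) div p ^ k = p - 1"
    by (simp_all only: mod_div_add_mult)
  moreover have "p ^ Suc k - 1 < p ^ Suc k" using prime_gt_0_nat[OF prime] by simp
  ultimately show ?case using Suc digit_prod_Suc[OF prime char, of "p ^ Suc k - 1" k u] by simp
qed (simp add: digit_prod_def)

context
  fixes y :: "nat \<Rightarrow> 'a" and e :: enat
  assumes y: "\<And>k. enat k < e \<Longrightarrow> y k ^ p = 0 \<and> (D ^^ (p ^ k)) (y k) = 1"
begin

text \<open>The heart of the construction: with \<open>E = D\<^sup>p\<^sup>\<^sup>k\<close> and \<open>Q = x\<^sup>[\<^sup>p\<^sup>\<^sup>k\<^sup>-\<^sup>1\<^sup>]\<close> (so that \<open>E Q = 0\<close>),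
  \<open>D x\<^sup>[\<^sup>p\<^sup>\<^sup>k\<^sup>+\<^sup>1\<^sup>] = E (Q \<phi>\<^sub>k) = Q E \<phi>\<^sub>k = x\<^sup>[\<^sup>p\<^sup>\<^sup>k\<^sup>+\<^sup>1\<^sup>-\<^sup>1\<^sup>]\<close>.\<close>

lemma construction_step:
  assumes desc: "descent_seq p D (enat (Suc k)) (digit_prod p (Suc k) (xpp p D y))"
    and nil: "\<And>l. l < Suc k \<Longrightarrow> xpp p D y l ^ p = 0" and k: "enat (Suc k) < e"
  shows "xpp p D y (Suc k) ^ p = 0 \<and>
    D (xpp p D y (Suc k)) = digit_prod p (Suc k) (xpp p D y) (p ^ Suc k - 1)"
proof -
  define u where "u = xpp p D y"
  define P where "P = p ^ k"
  define X where "X = digit_prod p (Suc k) u"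
  define Q where "Q = digit_prod p k u (P - 1)"
  define E where "E = D ^^ P"
  define \<phi> where "\<phi> = phi p E (u k) (y (Suc k))"
  interpret E: char_p_derivation p E
    unfolding E_def P_def by unfold_locales (use prime char derivation_funpow_prime_power[OF prime char derivation] in auto)
  have P0: "0 < P" and PS: "P < p ^ Suc k"
    unfolding P_def using prime_gt_0_nat[OF prime] prime_gt_1_nat[OF prime] by simp_all
  have X: "\<And>m j. j < p ^ Suc k \<Longrightarrow> (D ^^ m) (X j) = (if m \<le> j then X (j - m) else 0)" "X 0 = 1"
    using desc unfolding descent_seq_def X_def u_def by simp_all
  have XP: "X P = u k"
    using digit_seq_prime_power[OF prime char, of u k] digit_seq_eq_digit_prod[OF prime char PS, of u]
    unfolding X_def P_def by simp
  have XQ: "X (P - 1) = Q"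
    unfolding X_def Q_def by (rule digit_prod_eq[OF prime char]) (use P0 P_def in auto)
  have EQ: "E Q = 0" using X(1)[of "P - 1" P] XQ PS P0 unfolding E_def by simp
  have Ew: "E (u k) = 1" using X(1)[of P P] X(2) XP PS unfolding E_def by simp
  have z: "y (Suc k) ^ p = 0" "(E ^^ p) (y (Suc k)) = 1"
    using y[OF k] unfolding E_def P_def by (simp_all add: funpow_mult mult.commute)
  have uS: "u (Suc k) = (D ^^ (P - 1)) (Q * \<phi>)"
    using xpp_Suc[of p D y k] neg_one_power_prime_minus_one[OF prime char]
    unfolding u_def Q_def P_def \<phi>_def E_def digit_prod_prime_power_minus_one by simp
  have "D ^^ P = D \<circ> D ^^ (P - 1)" using P0 by (cases P) simp_all
  hence "D (u (Suc k)) = E (Q * \<phi>)" unfolding uS E_def by simp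
  also have "\<dots> = Q * E \<phi>" using EQ by (simp add: derivation_mult[OF E.derivation])
  also have "E \<phi> = divided_power p (u k) (p - 1)"
    using E.derivation_phi[OF Ew] z unfolding \<phi>_def by simp
  also have "Q * divided_power p (u k) (p - 1) = digit_prod p (Suc k) u (p ^ Suc k - 1)"
    unfolding Q_def P_def digit_prod_prime_power_minus_one by simp
  finally have Du: "D (u (Suc k)) = digit_prod p (Suc k) u (p ^ Suc k - 1)" .
  have "\<phi> ^ p = 0" unfolding \<phi>_def by (rule phi_pow_prime) (use nil z u_def in auto)
  moreover have "((D ^^ m) Q) ^ p = 0" if "m < P - 1" for m
  proof -
    have "(D ^^ m) Q = X (P - 1 - m)" using X(1)[of "P - 1" m] XQ PS that by simp
    moreover have "iterative_seq p (enat (Suc k)) X"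
      unfolding X_def u_def by (rule iterative_digit_prod[OF prime char]) (use nil in auto)
    ultimately show ?thesis using that PS by (simp add: iterative_seq_pow_prime[OF prime char])
  qed
  ultimately have "u (Suc k) ^ p = 0" unfolding uS by (rule funpow_mult_pow_prime[rotated])
  thus ?thesis using Du unfolding u_def by simp
qed

lemma construction_invariant:
  "enat K \<le> e \<Longrightarrow> descent_seq p D (enat K) (digit_prod p K (xpp p D y)) \<and> (\<forall>k<K. xpp p D y k ^ p = 0)"
proof (induction K)
  case 0
  show ?case by (auto intro!: descent_seqI[OF derivation] simp: digit_prod_def)
next
  case (Suc K)
  have K: "enat K < e" using Suc.prems by (simp add: Suc_ile_eq)
  hence desc: "descent_seq p D (enat K) (digit_prod p K (xpp p D y))"
    and nil: "\<forall>k<K. xpp p D y k ^ p = 0" using Suc.IH by auto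
  have step: "xpp p D y K ^ p = 0 \<and> D (xpp p D y K) = digit_prod p K (xpp p D y) (p ^ K - 1)"
  proof (cases K)
    case 0 thus ?thesis using y[OF K] by (simp add: digit_prod_def)
  next
    case (Suc k) thus ?thesis using construction_step desc nil K by simp
  qed
  have "descent_seq p D (enat (Suc K))
      (\<lambda>i. digit_prod p K (xpp p D y) (i mod p ^ K) * divided_power p (xpp p D y K) (i div p ^ K))"
    using step nil by (intro descent_seq_extend desc iterative_digit_prod[OF prime char]) simp_all
  moreover have "descent_seq p D (enat (Suc K)) (digit_prod p (Suc K) (xpp p D y)) \<longleftrightarrow>
      descent_seq p D (enat (Suc K))
        (\<lambda>i. digit_prod p K (xpp p D y) (i mod p ^ K) * divided_power p (xpp p D y K) (i div p ^ K))"
    by (rule descent_seq_cong[OF prime_gt_0_nat[OF prime]]) (simp add: digit_prod_Suc[OF prime char])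
  ultimately have "descent_seq p D (enat (Suc K)) (digit_prod p (Suc K) (xpp p D y))" by simp
  thus ?case using nil step less_Suc_eq by auto
qed

lemma xseq_descent_seq: "descent_seq p D e (xseq p D y)"
  unfolding descent_seq_def
proof (intro conjI allI impI)
  show "xseq p D y 0 = 1" by (simp add: xseq_eq_digit_seq digit_seq_zero_index[OF prime char])
  fix m j assume "below_ppow p e j"
  then obtain K where K: "enat K \<le> e" "j < p ^ K" by (rule below_ppow_bound)
  have "(D ^^ m) (digit_prod p K (xpp p D y) j) = (if m \<le> j then digit_prod p K (xpp p D y) (j - m) else 0)"
    using construction_invariant[OF K(1)] K(2) unfolding descent_seq_def by simp
  moreover have "j - m < p ^ K" using K(2) by linarith
  ultimately show "(D ^^ m) (xseq p D y j) = (if m \<le> j then xseq p D y (j - m) else 0)"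
    using K(2) by (simp add: xseq_eq_digit_seq digit_seq_eq_digit_prod[OF prime char])
qed

lemma xseq_iterative: "iterative_seq p e (xseq p D y)"
  unfolding xseq_eq_digit_seq
proof (rule iterative_digit_seq[OF prime char], intro allI impI)
  fix k assume "enat k < e"
  hence "enat (Suc k) \<le> e" by (simp add: Suc_ile_eq)
  thus "xpp p D y k ^ p = 0" using construction_invariant by blast
qed

end

lemma xpp_eq_0_if_commute:
  assumes D': "is_derivation D'" and comm: "D' \<circ> D = D \<circ> D'"
    and y: "\<And>k. enat k < e \<Longrightarrow> D' (y k) = 0"
  shows "enat k < e \<Longrightarrow> D' (xpp p D y k) = 0"
proof (induction k rule: less_induct)
  case (less k)
  show ?case
  proof (cases k)
    case 0 thus ?thesis using y less.prems by simp
  next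
    case (Suc k')
    have ih: "D' (xpp p D y l) = 0" if "l \<le> k'" for l
    proof -
      have "enat l < enat (Suc k')" using that by simp
      hence "enat l < e" using less.prems Suc less_trans by blast
      thus ?thesis using less.IH[of l] Suc that by simp
    qed
    have "D' (phi p (D ^^ p ^ k') (xpp p D y k') (y (Suc k'))) = 0"
      unfolding phi_def using ih[of k'] y less.prems Suc
      by (intro derivation_sum_eq_0[OF D'] derivation_mult_eq_0[OF D'] derivation_power_eq_0[OF D']
          derivation_neg_one_power[OF D'] derivation_fp_inv[OF D'] derivation_funpow_eq_0_if_commute[OF derivation comm])
        (simp_all add: funpow_mult derivation_minus[OF D'] derivation_one[OF D']
          derivation_funpow_eq_0_if_commute[OF derivation comm])
    moreover have "D' (\<Prod>l<k'. divided_power p (xpp p D y l) (p - 1)) = 0"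
      unfolding divided_power_def using ih
      by (intro derivation_prod_eq_0[OF D'] derivation_mult_eq_0[OF D'] derivation_power_eq_0[OF D']
          derivation_fp_inv[OF D']) simp_all
    ultimately show ?thesis unfolding Suc xpp_Suc
      by (intro derivation_mult_eq_0[OF D'] derivation_neg_one_power[OF D']
          derivation_funpow_eq_0_if_commute[OF derivation comm])
  qed
qed

lemma xseq_eq_0_if_commute:
  assumes D': "is_derivation D'" and comm: "D' \<circ> D = D \<circ> D'"
    and y: "\<And>k. enat k < e \<Longrightarrow> D' (y k) = 0" and j: "below_ppow p e j"
  shows "D' (xseq p D y j) = 0"
proof -
  have "\<forall>k. enat k < e \<longrightarrow> D' (xpp p D y k) = 0" using xpp_eq_0_if_commute[where y = y and e = e, OF D' comm y] by blast
  thus ?thesis unfolding xseq_eq_digit_seq by (rule digit_seq_eq_0_if_derivation[OF prime char D' _ j])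
qed

end

section \<open>The decomposition \<open>N = A\<^sup>D \<oplus> m\<close>\<close>

definition kernel_span :: "nat \<Rightarrow> ('a::comm_ring_1 \<Rightarrow> 'a) \<Rightarrow> enat \<Rightarrow> (nat \<Rightarrow> 'a) \<Rightarrow> 'a set" where
  "kernel_span p D e X = {(\<Sum>j\<in>J. c j * X j) | J c.
      finite J \<and> J \<subseteq> jset p e \<and> (\<forall>j\<in>J. c j \<in> kerD D)}"

lemma mset_eq_kernel_span: "mset p D e x' i = kernel_span p D e (\<lambda>j. x' (mvec i j))"
  unfolding mset_def kernel_span_def ..

lemma sum_if_mem_subset:
  assumes "finite J" "J1 \<subseteq> J"
  shows "(\<Sum>j\<in>J. (if j \<in> J1 then f j else 0)) = (\<Sum>j\<in>J1. f j)"
  using sum.inter_restrict[OF assms(1), of f J1] assms(2) by (simp add: Int_absorb1)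

context char_p_derivation
begin

lemma kernel_span_zero: "0 \<in> kernel_span p D e X"
  unfolding kernel_span_def by (rule CollectI, intro exI[of _ "{}"]) simp

lemma kernel_span_term:
  assumes "c \<in> kerD D" "j \<in> jset p e"
  shows "c * X j \<in> kernel_span p D e X"
  unfolding kernel_span_def using assms by (intro CollectI exI[of _ "{j}"] exI[of _ "\<lambda>_. c"]) simp

lemma kernel_span_add:
  assumes "a \<in> kernel_span p D e X" "b \<in> kernel_span p D e X"
  shows "a + b \<in> kernel_span p D e X"
proof -
  obtain J1 c1 where 1: "a = (\<Sum>j\<in>J1. c1 j * X j)" "finite J1" "J1 \<subseteq> jset p e" "\<forall>j\<in>J1. c1 j \<in> kerD D"
    using assms(1) unfolding kernel_span_def by blast
  obtain J2 c2 where 2: "b = (\<Sum>j\<in>J2. c2 j * X j)" "finite J2" "J2 \<subseteq> jset p e" "\<forall>j\<in>J2. c2 j \<in> kerD D"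
    using assms(2) unfolding kernel_span_def by blast
  define c where "c j = (if j \<in> J1 then c1 j else 0) + (if j \<in> J2 then c2 j else 0)" for j
  have f: "finite (J1 \<union> J2)" using 1 2 by simp
  have "(\<Sum>j\<in>J1 \<union> J2. c j * X j) =
      (\<Sum>j\<in>J1 \<union> J2. (if j \<in> J1 then c1 j * X j else 0) + (if j \<in> J2 then c2 j * X j else 0))"
    by (rule sum.cong[OF refl]) (simp add: c_def distrib_right)
  also have "\<dots> = (\<Sum>j\<in>J1 \<union> J2. (if j \<in> J1 then c1 j * X j else 0)) +
      (\<Sum>j\<in>J1 \<union> J2. (if j \<in> J2 then c2 j * X j else 0))"
    by (rule sum.distrib)
  also have "\<dots> = a + b" using 1 2 f by (simp add: sum_if_mem_subset)
  finally have "(\<Sum>j\<in>J1 \<union> J2. c j * X j) = a + b" .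
  moreover have "\<forall>j\<in>J1 \<union> J2. c j \<in> kerD D"
    using 1 2 unfolding c_def kerD_def by (auto simp: derivation_add[OF derivation] derivation_zero[OF derivation])
  ultimately show ?thesis unfolding kernel_span_def using f 1 2
    by (intro CollectI exI[of _ "J1 \<union> J2"] exI[of _ c]) auto
qed

lemma kernel_span_uminus:
  assumes "a \<in> kernel_span p D e X"
  shows "- a \<in> kernel_span p D e X"
proof -
  obtain J c where 1: "a = (\<Sum>j\<in>J. c j * X j)" "finite J" "J \<subseteq> jset p e" "\<forall>j\<in>J. c j \<in> kerD D"
    using assms unfolding kernel_span_def by blast
  have "- a = (\<Sum>j\<in>J. (- c j) * X j)" using 1 by (simp add: sum_negf)
  moreover have "\<forall>j\<in>J. - c j \<in> kerD D" using 1 unfolding kerD_def by (simp add: derivation_minus[OF derivation])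
  ultimately show ?thesis unfolding kernel_span_def using 1
    by (intro CollectI exI[of _ J] exI[of _ "\<lambda>j. - c j"]) simp
qed

lemma kernel_span_diff:
  "a \<in> kernel_span p D e X \<Longrightarrow> b \<in> kernel_span p D e X \<Longrightarrow> a - b \<in> kernel_span p D e X"
  using kernel_span_add[of a e X "- b"] kernel_span_uminus[of b] by simp

lemma kernel_span_pow_prime:
  assumes X: "iterative_seq p e X" and m: "m \<in> kernel_span p D e X"
  shows "m ^ p = 0"
proof -
  obtain J c where Jc: "m = (\<Sum>j\<in>J. c j * X j)" "J \<subseteq> jset p e"
    using m unfolding kernel_span_def by blast
  have "(c j * X j) ^ p = 0" if "j \<in> J" for j
    using iterative_seq_pow_prime[OF prime char X, of j] Jc(2) that
    unfolding jset_def by (auto simp: power_mult_distrib)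
  thus ?thesis unfolding Jc(1) frobenius_sum[OF prime char] by simp
qed

context
  fixes e :: enat and X :: "nat \<Rightarrow> 'a"
  assumes X: "descent_seq p D e X"
begin

lemma X_zero: "X 0 = 1"
  using X unfolding descent_seq_def by simp

lemma X_funpow: "below_ppow p e j \<Longrightarrow> (D ^^ m) (X j) = (if m \<le> j then X (j - m) else 0)"
  using X unfolding descent_seq_def by simp

text \<open>Applying \<open>D\<^sup>m\<close> with \<open>m\<close> the largest index isolates the top coefficient.\<close>

lemma descent_seq_linear_independent:
  assumes "finite J" "\<forall>j\<in>J. below_ppow p e j" "\<forall>j\<in>J. D (c j) = 0" "(\<Sum>j\<in>J. c j * X j) = 0"
  shows "\<forall>j\<in>J. c j = 0"
  using assms
proof (induction "card J" arbitrary: J rule: less_induct)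
  case less
  show ?case
  proof (cases "J = {}")
    case False
    define m where "m = Max J"
    have mJ: "m \<in> J" and jm: "\<And>j. j \<in> J \<Longrightarrow> j \<le> m"
      unfolding m_def using False less.prems(1) by simp_all
    have "(D ^^ m) (\<Sum>j\<in>J. c j * X j) = (\<Sum>j\<in>J. c j * (D ^^ m) (X j))"
      using less.prems(3) by (simp add: derivation_funpow_sum[OF derivation] derivation_funpow_mult_const[OF derivation])
    also have "\<dots> = (\<Sum>j\<in>J. if j = m then c m else 0)"
    proof (rule sum.cong[OF refl])
      fix j assume j: "j \<in> J"
      have "(D ^^ m) (X j) = (if m \<le> j then X (j - m) else 0)"
        using X_funpow less.prems(2) j by blast
      thus "c j * (D ^^ m) (X j) = (if j = m then c m else 0)"
        using jm[OF j] X_zero by (cases "j = m") auto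
    qed
    also have "\<dots> = c m" using mJ less.prems(1) by simp
    finally have cm: "c m = 0" using less.prems(4) derivation_funpow_zero[OF derivation] by simp
    have "\<forall>j\<in>J - {m}. c j = 0"
    proof (rule less.hyps)
      show "card (J - {m}) < card J" by (rule card_Diff1_less[OF less.prems(1) mJ])
      show "(\<Sum>j\<in>J - {m}. c j * X j) = 0"
        using sum.remove[OF less.prems(1) mJ, of "\<lambda>j. c j * X j"] less.prems(4) cm by simp
    qed (use less.prems in auto)
    thus ?thesis using cm by blast
  qed simp
qed

lemma kernel_span_inter_kernel:
  assumes "a \<in> kerD D" "a \<in> kernel_span p D e X"
  shows "a = 0"
proof -
  obtain J c where J: "a = (\<Sum>j\<in>J. c j * X j)" "finite J" "J \<subseteq> jset p e" "\<forall>j\<in>J. c j \<in> kerD D"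
    using assms(2) unfolding kernel_span_def by blast
  have n0: "0 \<notin> J" using J(3) unfolding jset_def by auto
  define c' where "c' = c(0 := - a)"
  have "(\<Sum>j\<in>J. c' j * X j) = (\<Sum>j\<in>J. c j * X j)"
    using n0 unfolding c'_def by (intro sum.cong) auto
  hence "(\<Sum>j\<in>insert 0 J. c' j * X j) = - a * X 0 + (\<Sum>j\<in>J. c j * X j)"
    using J(2) n0 unfolding c'_def by simp
  hence sum0: "(\<Sum>j\<in>insert 0 J. c' j * X j) = 0" using J(1) X_zero by simp
  have "\<forall>j\<in>insert 0 J. c' j = 0"
  proof (rule descent_seq_linear_independent)
    show "\<forall>j\<in>insert 0 J. below_ppow p e j"
      using J(3) below_ppow_zero[OF prime_gt_0_nat[OF prime]] unfolding jset_def by auto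
    show "\<forall>j\<in>insert 0 J. D (c' j) = 0"
      using J(4) n0 assms(1) unfolding c'_def kerD_def by (auto simp: derivation_minus[OF derivation])
  qed (use J(2) sum0 in simp_all)
  thus ?thesis unfolding c'_def by simp
qed

lemma kernel_plus_kernel_span_subset_Nset:
  assumes "a \<in> kerD D" "m \<in> kernel_span p D e X"
  shows "a + m \<in> Nset p D e"
proof -
  obtain J c where J: "m = (\<Sum>j\<in>J. c j * X j)" "finite J" "J \<subseteq> jset p e" "\<forall>j\<in>J. c j \<in> kerD D"
    using assms(2) unfolding kernel_span_def by blast
  have kill: "(D ^^ N) (a + m) = 0" if N: "1 \<le> N" "\<forall>j\<in>J. j < N" for N
  proof -
    obtain N' where "N = Suc N'" using N(1) by (cases N) auto
    hence "(D ^^ N) a = (D ^^ N') (D a)" by (simp only: funpow_Suc_right comp_apply)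
    hence "(D ^^ N) a = 0" using assms(1) derivation_funpow_zero[OF derivation] unfolding kerD_def by simp
    moreover have "(D ^^ N) (X j) = 0" if "j \<in> J" for j
    proof -
      have "below_ppow p e j" "j < N" using J(3) N(2) that unfolding jset_def by auto
      thus ?thesis using X_funpow by simp
    qed
    hence "(D ^^ N) m = 0" unfolding J(1) using J(4) unfolding kerD_def
      by (simp add: derivation_funpow_sum[OF derivation] derivation_funpow_mult_const[OF derivation])
    ultimately show ?thesis by (simp add: derivation_funpow_add[OF derivation])
  qed
  show ?thesis
  proof (cases e)
    case (enat M)
    have "(D ^^ (p ^ M)) (a + m) = 0"
      using prime_gt_0_nat[OF prime] J(3) enat by (intro kill) (auto simp: jset_def Suc_le_eq)
    thus ?thesis unfolding Nset_def enat by simp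
  next
    case infinity
    have "\<forall>j\<in>J. j < Suc (\<Sum>J)" using J(2) member_le_sum[of _ J "\<lambda>j. j"] by (simp add: le_imp_less_Suc)
    hence "(D ^^ Suc (\<Sum>J)) (a + m) = 0" by (intro kill) simp_all
    thus ?thesis unfolding Nset_def infinity by (simp only: mem_Collect_eq enat.case) blast
  qed
qed

text \<open>Peeling off the top term: if \<open>D\<^sup>N\<^sup>+\<^sup>1 a = 0\<close> then \<open>a - (D\<^sup>N a) X\<^sub>N\<close> is killed by \<open>D\<^sup>N\<close>.\<close>

lemma kernel_plus_kernel_span_if_funpow_eq_0:
  "(D ^^ N) a = 0 \<Longrightarrow> (\<forall>j<N. below_ppow p e j) \<Longrightarrow> \<exists>b m. b \<in> kerD D \<and> m \<in> kernel_span p D e X \<and> a = b + m"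
proof (induction N arbitrary: a)
  case 0 thus ?case using kernel_span_zero by (intro exI[of _ 0]) (auto simp: kerD_def derivation_zero[OF derivation])
next
  case (Suc N)
  define g where "g = (D ^^ N) a"
  have Dg: "D g = 0" using Suc.prems unfolding g_def by simp
  show ?case
  proof (cases "N = 0")
    case True
    thus ?thesis using Dg kernel_span_zero unfolding g_def kerD_def by (intro exI[of _ a] exI[of _ 0]) simp
  next
    case False
    have bN: "below_ppow p e N" using Suc.prems by simp
    have "(D ^^ N) (a - g * X N) = g - g * (D ^^ N) (X N)"
      unfolding derivation_funpow_diff[OF derivation] derivation_funpow_mult_const[OF derivation Dg] by (simp add: g_def)
    also have "(D ^^ N) (X N) = 1" using X_funpow[OF bN, of N] X_zero by simp
    finally obtain b m where bm: "b \<in> kerD D" "m \<in> kernel_span p D e X" "a - g * X N = b + m"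
      using Suc.IH[of "a - g * X N"] Suc.prems(2) by auto
    have "g * X N \<in> kernel_span p D e X"
      by (rule kernel_span_term) (use Dg bN False in \<open>auto simp: kerD_def jset_def\<close>)
    hence "m + g * X N \<in> kernel_span p D e X" using bm(2) kernel_span_add by blast
    moreover have "a = b + (m + g * X N)" using bm(3) by (simp add: algebra_simps)
    ultimately show ?thesis using bm(1) by blast
  qed
qed

lemma Nset_eq_kernel_plus_kernel_span:
  "Nset p D e = {a + m | a m. a \<in> kerD D \<and> m \<in> kernel_span p D e X}"
proof
  show "{a + m | a m. a \<in> kerD D \<and> m \<in> kernel_span p D e X} \<subseteq> Nset p D e"
    using kernel_plus_kernel_span_subset_Nset by blast
  show "Nset p D e \<subseteq> {a + m | a m. a \<in> kerD D \<and> m \<in> kernel_span p D e X}"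
  proof
    fix a assume "a \<in> Nset p D e"
    then obtain N where "(D ^^ N) a = 0" "\<forall>j<N. below_ppow p e j"
      unfolding Nset_def by (cases e) auto
    from kernel_plus_kernel_span_if_funpow_eq_0[OF this]
    show "a \<in> {a + m | a m. a \<in> kerD D \<and> m \<in> kernel_span p D e X}" by blast
  qed
qed

lemma kernel_component_eq:
  assumes "c \<in> kerD D" "v - c \<in> kernel_span p D e X"
  shows "(THE c. c \<in> kerD D \<and> v - c \<in> kernel_span p D e X) = c"
proof (rule the_equality)
  fix c' assume c': "c' \<in> kerD D \<and> v - c' \<in> kernel_span p D e X"
  have "c - c' \<in> kernel_span p D e X"
    using kernel_span_diff[of "v - c'" e X "v - c"] c' assms by simp
  moreover have "c - c' \<in> kerD D" using c' assms unfolding kerD_def by (simp add: derivation_diff[OF derivation])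
  ultimately show "c' = c" using kernel_span_inter_kernel by fastforce
qed (use assms in simp)

text \<open>A derivation commuting with \<open>D\<close> preserves \<open>kerD D\<close> and the span, hence the
  decomposition; so it kills the kernel component of anything it kills.\<close>

lemma kernel_component_eq_0_if_commute:
  assumes D': "is_derivation D'" and comm: "D \<circ> D' = D' \<circ> D"
    and X': "\<And>j. below_ppow p e j \<Longrightarrow> D' (X j) = 0" and v: "D' v = 0"
    and b: "b \<in> kerD D" "v - b \<in> kernel_span p D e X"
  shows "D' b = 0"
proof -
  have ker: "D' a \<in> kerD D" if "a \<in> kerD D" for a
    using that fun_cong[OF comm, of a] derivation_zero[OF D'] unfolding kerD_def by simp
  obtain J c where J: "v - b = (\<Sum>j\<in>J. c j * X j)" "finite J" "J \<subseteq> jset p e" "\<forall>j\<in>J. c j \<in> kerD D"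
    using b(2) unfolding kernel_span_def by blast
  have "- D' b = (\<Sum>j\<in>J. D' (c j) * X j)"
    using arg_cong[OF J(1), of D'] J(3) X' v unfolding jset_def
    by (auto simp: derivation_diff[OF D'] derivation_sum[OF D'] derivation_mult[OF D'] intro!: sum.cong)
  hence "- D' b \<in> kernel_span p D e X"
    unfolding kernel_span_def using J ker by (intro CollectI exI[of _ J] exI[of _ "\<lambda>j. D' (c j)"]) auto
  moreover have "- D' b \<in> kerD D" using ker[OF b(1)] unfolding kerD_def by (simp add: derivation_minus[OF derivation])
  ultimately show ?thesis using kernel_span_inter_kernel by fastforce
qed

end

end

section \<open>Twisting a descent sequence by constants\<close>

definition convolution :: "(nat \<Rightarrow> 'a::comm_ring_1) \<Rightarrow> (nat \<Rightarrow> 'a) \<Rightarrow> nat \<Rightarrow> 'a" where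
  "convolution X L m = (\<Sum>l\<le>m. X (m - l) * L l)"

text \<open>Grouping the double sum by \<open>n = l + l'\<close>; Vandermonde's identity collects the coefficients.\<close>

lemma sum_sum_choose_regroup:
  fixes g :: "nat \<Rightarrow> 'a::comm_semiring_1"
  shows "(\<Sum>l\<le>a. \<Sum>l'\<le>b. of_nat ((a - l + (b - l')) choose (a - l)) * of_nat ((l + l') choose l) * g (l + l')) =
    of_nat ((a + b) choose a) * (\<Sum>n\<le>a + b. g n)"
proof -
  define F where "F l n = of_nat (((a + b - n) choose (a - l)) * (n choose l)) * g n" for l n
  have inner: "(\<Sum>l'\<le>b. of_nat ((a - l + (b - l')) choose (a - l)) * of_nat ((l + l') choose l) * g (l + l')) =
      (\<Sum>n\<le>a + b. F l n)" if l: "l \<le> a" for l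
  proof -
    have "(\<Sum>l'\<le>b. of_nat ((a - l + (b - l')) choose (a - l)) * of_nat ((l + l') choose l) * g (l + l')) =
        (\<Sum>l'\<le>b. F l (l' + l))"
      using l by (intro sum.cong) (auto simp: F_def add.commute)
    also have "\<dots> = (\<Sum>n\<in>{l..b + l}. F l n)"
      using sum.shift_bounds_cl_nat_ivl[of "F l" 0 l b] by (simp add: atMost_atLeast0)
    also have "\<dots> = (\<Sum>n\<le>a + b. F l n)"
    proof (rule sum.mono_neutral_left)
      show "\<forall>n\<in>{..a + b} - {l..b + l}. F l n = 0"
      proof
        fix n assume n: "n \<in> {..a + b} - {l..b + l}"
        show "F l n = 0"
        proof (cases "n < l")
          case False
          hence "a + b - n < a - l" using n by auto
          thus ?thesis by (simp add: F_def binomial_eq_0)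
        qed (simp add: F_def binomial_eq_0)
      qed
    qed (use l in auto)
    finally show ?thesis .
  qed
  have "(\<Sum>l\<le>a. \<Sum>l'\<le>b. of_nat ((a - l + (b - l')) choose (a - l)) * of_nat ((l + l') choose l) * g (l + l')) =
      (\<Sum>l\<le>a. \<Sum>n\<le>a + b. F l n)"
    by (rule sum.cong[OF refl], rule inner) simp
  also have "\<dots> = (\<Sum>n\<le>a + b. \<Sum>l\<le>a. F l n)" by (rule sum.swap)
  also have "\<dots> = (\<Sum>n\<le>a + b. of_nat ((a + b) choose a) * g n)"
  proof (rule sum.cong[OF refl])
    fix n assume "n \<in> {..a + b}"
    have "(\<Sum>l\<le>a. F l n) = of_nat (\<Sum>l\<le>a. ((a + b - n) choose (a - l)) * (n choose l)) * g n"
      unfolding F_def of_nat_sum sum_distrib_right ..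
    moreover have "(\<Sum>l\<le>a. ((a + b - n) choose (a - l)) * (n choose l)) = (a + b) choose a"
      using vandermonde[of n "a + b - n" a] \<open>n \<in> {..a + b}\<close> by (simp add: mult.commute)
    ultimately show "(\<Sum>l\<le>a. F l n) = of_nat ((a + b) choose a) * g n" by simp
  qed
  finally show ?thesis by (simp add: sum_distrib_left)
qed

context
  fixes p :: nat
  assumes prime: "prime p" and char: "of_nat p = (0::'a::comm_ring_1)"
begin

lemma iterative_convolution:
  assumes X: "iterative_seq p e (X :: nat \<Rightarrow> 'a)" and L: "iterative_seq p e L"
  shows "iterative_seq p e (convolution X L)"
  unfolding iterative_seq_def
proof (intro allI impI)
  fix a b assume a: "below_ppow p e a" and b: "below_ppow p e b"
  define g where "g n = (if below_ppow p e (a + b - n) \<and> below_ppow p e n then X (a + b - n) * L n else 0)" for n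
  have terms: "X (a - l) * L l * (X (b - l') * L l') =
      of_nat ((a - l + (b - l')) choose (a - l)) * of_nat ((l + l') choose l) * g (l + l')"
    if l: "l \<le> a" "l' \<le> b" for l l'
  proof -
    have bel: "below_ppow p e (a - l)" "below_ppow p e (b - l')" "below_ppow p e l" "below_ppow p e l'"
      using a b l by (auto intro: below_ppow_mono)
    have n: "a - l + (b - l') = a + b - (l + l')" using l by simp
    have XX: "X (a - l) * X (b - l') = (if below_ppow p e (a + b - (l + l'))
        then of_nat ((a - l + (b - l')) choose (a - l)) * X (a + b - (l + l')) else 0)"
      using X bel unfolding iterative_seq_def n[symmetric] by blast
    have LL: "L l * L l' = (if below_ppow p e (l + l') then of_nat ((l + l') choose l) * L (l + l') else 0)"
      using L bel unfolding iterative_seq_def by blast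
    have "X (a - l) * L l * (X (b - l') * L l') = (X (a - l) * X (b - l')) * (L l * L l')"
      by (simp only: ac_simps)
    also have "\<dots> = of_nat ((a - l + (b - l')) choose (a - l)) * of_nat ((l + l') choose l) * g (l + l')"
      unfolding XX LL g_def by (simp add: ac_simps)
    finally show ?thesis .
  qed
  have "convolution X L a * convolution X L b = (\<Sum>l\<le>a. \<Sum>l'\<le>b. X (a - l) * L l * (X (b - l') * L l'))"
    unfolding convolution_def by (rule sum_product)
  also have "\<dots> = of_nat ((a + b) choose a) * (\<Sum>n\<le>a + b. g n)"
    unfolding sum_sum_choose_regroup[symmetric] by (intro sum.cong refl terms) auto
  also have "\<dots> = (if below_ppow p e (a + b) then of_nat ((a + b) choose a) * convolution X L (a + b) else 0)"
  proof (cases "below_ppow p e (a + b)")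
    case True
    hence "g n = X (a + b - n) * L n" if "n \<le> a + b" for n
      using that unfolding g_def by (auto intro: below_ppow_mono)
    thus ?thesis using True unfolding convolution_def by simp
  next
    case False
    thus ?thesis
      using of_nat_eq_0_if_char_dvd[OF char prime_dvd_choose_if_not_below[OF prime char a b False]] by simp
  qed
  finally show "convolution X L a * convolution X L b =
      (if below_ppow p e (a + b) then of_nat ((a + b) choose a) * convolution X L (a + b) else 0)" .
qed

end

context char_p_derivation
begin

lemma convolution_descent_seq:
  assumes X: "descent_seq p D e X" and L0: "L 0 = 1" and L: "\<And>l. below_ppow p e l \<Longrightarrow> D (L l) = 0"
  shows "descent_seq p D e (convolution X L)"
proof (rule descent_seqI[OF derivation])
  show "convolution X L 0 = 1" using X L0 by (simp add: convolution_def descent_seq_def)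
  fix j assume j: "below_ppow p e j" "1 \<le> j"
  then obtain j' where j': "j = Suc j'" by (cases j) auto
  have "D (X (j - l) * L l) = (if l < j then X (j - l - 1) * L l else 0)" if "l \<le> j" for l
  proof -
    have "below_ppow p e l" "below_ppow p e (j - l)" using j(1) that by (auto intro: below_ppow_mono)
    moreover have "D (X (j - l)) = (if l < j then X (j - l - 1) else 0)"
      using descent_seq_step[OF X \<open>below_ppow p e (j - l)\<close>] X that
      by (cases "l < j") (auto simp: descent_seq_def derivation_one[OF derivation])
    ultimately show ?thesis using L by (simp add: derivation_mult[OF derivation])
  qed
  hence "D (convolution X L j) = (\<Sum>l\<le>j. if l < j then X (j - l - 1) * L l else 0)"
    unfolding convolution_def derivation_sum[OF derivation] by (intro sum.cong) auto
  also have "\<dots> = convolution X L (j - 1)"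
    unfolding j' convolution_def by (simp add: sum.atMost_Suc)
  finally show "D (convolution X L j) = convolution X L (j - 1)" .
qed

lemma convolution_minus_mem_kernel_span:
  assumes X0: "X 0 = 1" and L: "\<And>l. below_ppow p e l \<Longrightarrow> L l \<in> kerD D" and j: "below_ppow p e j"
  shows "convolution X L j - L j \<in> kernel_span p D e X"
proof -
  have "convolution X L j - L j = (\<Sum>l<j. X (j - l) * L l)"
    using X0 unfolding convolution_def by (simp add: lessThan_Suc_atMost[symmetric])
  also have "\<dots> = (\<Sum>i\<in>{1..j}. L (j - i) * X i)"
    by (subst sum.atLeastLessThan_rev_at_least_Suc_atMost[of _ 0 j, simplified lessThan_atLeast0[symmetric]])
      (auto intro: sum.cong simp: mult.commute)
  finally have "convolution X L j - L j = (\<Sum>i\<in>{1..j}. L (j - i) * X i)" .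
  moreover have "{1..j} \<subseteq> jset p e" using j unfolding jset_def by (auto intro: below_ppow_mono)
  moreover have "\<forall>i\<in>{1..j}. L (j - i) \<in> kerD D" by (intro ballI L below_ppow_mono[OF j]) simp
  ultimately show ?thesis unfolding kernel_span_def
    by (intro CollectI exI[of _ "{1..j}"] exI[of _ "\<lambda>i. L (j - i)"]) auto
qed

lemma convolution_eq_0_if_derivation:
  assumes D': "is_derivation D'" and X: "\<And>l. below_ppow p e l \<Longrightarrow> D' (X l) = 0"
    and L: "\<And>l. below_ppow p e l \<Longrightarrow> D' (L l) = 0" and j: "below_ppow p e j"
  shows "D' (convolution X L j) = 0"
  unfolding convolution_def
proof (rule derivation_sum_eq_0[OF D'])
  fix l assume "l \<in> {..j}"
  hence "below_ppow p e (j - l)" "below_ppow p e l" using j below_ppow_mono by auto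
  thus "D' (X (j - l) * L l) = 0" using X L derivation_mult_eq_0[OF D'] by blast
qed

end

section \<open>Iterative \<open>\<delta>\<close>-descents\<close>

lemma mvec_zero [simp]: "mvec i 0 = (\<lambda>_. 0)"
  unfolding mvec_def by auto

lemma mvec_in_natn: "i < n \<Longrightarrow> mvec i j \<in> natn n"
  unfolding mvec_def natn_def by auto

lemma mvec_in_idx_set_iff: "p > 0 \<Longrightarrow> i < n \<Longrightarrow> mvec i j \<in> idx_set p n d \<longleftrightarrow> below_ppow p (d i) j"
  unfolding idx_set_def using mvec_in_natn[of i n j] below_ppow_zero[of p]
  by (auto simp: mvec_def below_ppow_def split: enat.splits)

lemma mvec_add: "(\<lambda>l. mvec i a l + mvec i b l) = mvec i (a + b)"
  unfolding mvec_def by auto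

lemma mvec_le_iff: "(\<forall>l. mvec i m l \<le> mvec i j l) \<longleftrightarrow> m \<le> j"
  unfolding mvec_def by (auto dest: spec[of _ i])

lemma mvec_diff: "(\<lambda>l. mvec i j l - mvec i m l) = mvec i (j - m)"
  unfolding mvec_def by auto

lemma mbinom_mvec: "i < n \<Longrightarrow> mbinom n (mvec i a) (mvec i b) = (a + b) choose a"
  unfolding mbinom_def mvec_def using binomial_symmetric[of a "a + b"]
  by (simp add: if_distrib prod.If_cases Int_absorb1 lessThan_iff)

lemma dpow_eq_id: "(\<And>l. l < n \<Longrightarrow> \<alpha> l = 0) \<Longrightarrow> dpow \<delta> n \<alpha> = id"
  by (induction n) auto

lemma dpow_mvec: "dpow \<delta> n (mvec i m) = (if i < n then \<delta> i ^^ m else id)"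
proof (induction n)
  case (Suc n)
  show ?case
  proof (cases "i = n")
    case True
    have "dpow \<delta> n (mvec i m) = id" by (rule dpow_eq_id) (use True in \<open>simp add: mvec_def\<close>)
    thus ?thesis using True by (simp add: mvec_def)
  qed (use Suc in \<open>auto simp: mvec_def\<close>)
qed simp

text \<open>The restriction of a \<open>\<delta>\<close>-descent to the \<open>i\<close>-th axis \<open>j \<mapsto> y\<^sup>[\<^sup>j\<^sup>e\<^sup>\<^sub>i\<^sup>]\<close>.\<close>

definition axis_descent :: "nat \<Rightarrow> nat \<Rightarrow> (nat \<Rightarrow> 'a::comm_ring_1 \<Rightarrow> 'a) \<Rightarrow> (nat \<Rightarrow> enat) \<Rightarrow> nat \<Rightarrow> (nat \<Rightarrow> 'a) \<Rightarrow> bool" where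
  "axis_descent p n \<delta> d i X \<longleftrightarrow> descent_seq p (\<delta> i) (d i) X \<and> iterative_seq p (d i) X \<and>
     (\<forall>l<n. l \<noteq> i \<longrightarrow> (\<forall>j. below_ppow p (d i) j \<longrightarrow> \<delta> l (X j) = 0))"

locale commuting_derivations =
  fixes p n :: nat and \<delta> :: "nat \<Rightarrow> 'a::comm_ring_1 \<Rightarrow> 'a" and d :: "nat \<Rightarrow> enat"
  assumes prime: "prime p" and char: "of_nat p = (0::'a)"
    and derivations: "\<And>i. i < n \<Longrightarrow> is_derivation (\<delta> i)"
    and commute: "\<And>i j. i < n \<Longrightarrow> j < n \<Longrightarrow> \<delta> i \<circ> \<delta> j = \<delta> j \<circ> \<delta> i"
begin

lemma char_p_derivation: "i < n \<Longrightarrow> char_p_derivation p (\<delta> i)"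
  using derivations prime char by (simp add: char_p_derivation_def)

lemma funpow_prod_eq_if_others_killed:
  assumes j: "j < n" and kill: "\<And>i. i < n \<Longrightarrow> i \<noteq> j \<Longrightarrow> \<delta> j (F i) = 0"
  shows "(\<delta> j ^^ m) (\<Prod>i<n. F i) = (\<Prod>i<n. if i = j then (\<delta> j ^^ m) (F i) else F i)"
proof -
  have jn: "j \<in> {..<n}" using j by simp
  have c: "\<delta> j (\<Prod>i\<in>{..<n} - {j}. F i) = 0"
    by (rule derivation_prod_eq_0[OF derivations[OF j]]) (use kill in auto)
  have "(\<Prod>i<n. F i) = (\<Prod>i\<in>{..<n} - {j}. F i) * F j"
    using prod.remove[OF _ jn, of F] by (simp add: mult.commute)
  hence "(\<delta> j ^^ m) (\<Prod>i<n. F i) = (\<Prod>i\<in>{..<n} - {j}. F i) * (\<delta> j ^^ m) (F j)"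
    using derivation_funpow_mult_const[OF derivations[OF j] c] by simp
  also have "(\<Prod>i\<in>{..<n} - {j}. F i) = (\<Prod>i\<in>{..<n} - {j}. if i = j then (\<delta> j ^^ m) (F i) else F i)"
    by (rule prod.cong) auto
  also have "\<dots> * (\<delta> j ^^ m) (F j) = (\<Prod>i<n. if i = j then (\<delta> j ^^ m) (F i) else F i)"
    using prod.remove[OF _ jn, of "\<lambda>i. if i = j then (\<delta> j ^^ m) (F i) else F i"] by (simp add: mult.commute)
  finally show ?thesis .
qed

lemma dpow_prod:
  assumes kill: "\<And>i j. i < n \<Longrightarrow> j < n \<Longrightarrow> i \<noteq> j \<Longrightarrow> \<delta> j (F i) = 0"
  shows "dpow \<delta> n \<alpha> (\<Prod>i<n. F i) = (\<Prod>i<n. (\<delta> i ^^ \<alpha> i) (F i))"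
proof -
  have "dpow \<delta> m \<alpha> (\<Prod>i<n. F i) = (\<Prod>i<n. if i < m then (\<delta> i ^^ \<alpha> i) (F i) else F i)"
    if "m \<le> n" "\<And>i j. i < n \<Longrightarrow> j < n \<Longrightarrow> i \<noteq> j \<Longrightarrow> \<delta> j (F i) = 0" for m F
    using that
  proof (induction m arbitrary: F)
    case (Suc m)
    define F' where "F' = F(m := (\<delta> m ^^ \<alpha> m) (F m))"
    have "\<delta> j (F' i) = 0" if ij: "i < n" "j < n" "i \<noteq> j" for i j
    proof (cases "i = m")
      case True
      have "\<delta> j ((\<delta> m ^^ \<alpha> m) (F m)) = 0"
      proof (rule derivation_funpow_eq_0_if_commute)
        show "is_derivation (\<delta> m)" using Suc.prems(1) derivations by simp
        show "\<delta> j \<circ> \<delta> m = \<delta> m \<circ> \<delta> j" using Suc.prems(1) ij commute by simp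
        show "\<delta> j (F m) = 0" using Suc.prems(2) ij True by simp
      qed
      thus ?thesis using True unfolding F'_def by simp
    qed (use ij Suc.prems(2) in \<open>simp add: F'_def\<close>)
    hence "dpow \<delta> m \<alpha> (\<Prod>i<n. F' i) = (\<Prod>i<n. if i < m then (\<delta> i ^^ \<alpha> i) (F' i) else F' i)"
      using Suc.prems(1) by (intro Suc.IH) simp_all
    moreover have "(\<delta> m ^^ \<alpha> m) (\<Prod>i<n. F i) = (\<Prod>i<n. if i = m then (\<delta> m ^^ \<alpha> m) (F i) else F i)"
      using Suc.prems by (intro funpow_prod_eq_if_others_killed) auto
    moreover have "(\<Prod>i<n. if i = m then (\<delta> m ^^ \<alpha> m) (F i) else F i) = (\<Prod>i<n. F' i)"
      unfolding F'_def by (rule prod.cong) auto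
    moreover have "(\<Prod>i<n. if i < m then (\<delta> i ^^ \<alpha> i) (F' i) else F' i) =
        (\<Prod>i<n. if i < Suc m then (\<delta> i ^^ \<alpha> i) (F i) else F i)"
      by (rule prod.cong[OF refl]) (auto simp: F'_def less_Suc_eq)
    ultimately show ?case by simp
  qed simp
  from this[OF le_refl kill] show ?thesis by simp
qed

lemma product_is_descent:
  assumes X: "\<And>i. i < n \<Longrightarrow> axis_descent p n \<delta> d i (X i)"
  shows "is_descent p n \<delta> d (restrict (\<lambda>\<alpha>. \<Prod>i<n. X i (\<alpha> i)) (idx_set p n d))"
  unfolding is_descent_def
proof (intro conjI ballI)
  have X0: "\<And>i. i < n \<Longrightarrow> X i 0 = 1" using X unfolding axis_descent_def descent_seq_def by blast
  have "(\<lambda>_. 0) \<in> idx_set p n d"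
    unfolding idx_set_def natn_def using below_ppow_zero[OF prime_gt_0_nat[OF prime]] by simp
  thus "restrict (\<lambda>\<alpha>. \<Prod>i<n. X i (\<alpha> i)) (idx_set p n d) (\<lambda>_. 0) = 1" using X0 by simp
  fix \<alpha> \<beta> assume \<alpha>: "\<alpha> \<in> natn n" and \<beta>: "\<beta> \<in> idx_set p n d"
  have b: "\<And>i. i < n \<Longrightarrow> below_ppow p (d i) (\<beta> i)" using \<beta> unfolding idx_set_def by blast
  have "dpow \<delta> n \<alpha> (\<Prod>i<n. X i (\<beta> i)) = (\<Prod>i<n. (\<delta> i ^^ \<alpha> i) (X i (\<beta> i)))"
    by (rule dpow_prod) (use X b in \<open>auto simp: axis_descent_def\<close>)
  also have "\<dots> = (\<Prod>i<n. if \<alpha> i \<le> \<beta> i then X i (\<beta> i - \<alpha> i) else 0)"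
    by (rule prod.cong) (use X b in \<open>auto simp: axis_descent_def descent_seq_def\<close>)
  also have "\<dots> = (if \<forall>i. \<alpha> i \<le> \<beta> i then (\<Prod>i<n. X i (\<beta> i - \<alpha> i)) else 0)"
  proof (cases "\<forall>i. \<alpha> i \<le> \<beta> i")
    case False
    then obtain i where i: "\<not> \<alpha> i \<le> \<beta> i" by blast
    have "i < n"
    proof (rule ccontr)
      assume "\<not> i < n"
      hence "\<alpha> i = 0" using \<alpha> unfolding natn_def by simp
      thus False using i by simp
    qed
    thus ?thesis using i False by (intro trans[OF prod_zero]) auto
  qed simp
  moreover have "(\<lambda>i. \<beta> i - \<alpha> i) \<in> idx_set p n d"
    using \<beta> unfolding idx_set_def natn_def by (auto intro: below_ppow_mono)
  ultimately show "dpow \<delta> n \<alpha> (restrict (\<lambda>\<alpha>. \<Prod>i<n. X i (\<alpha> i)) (idx_set p n d) \<beta>) =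
      (if \<forall>i. \<alpha> i \<le> \<beta> i then restrict (\<lambda>\<alpha>. \<Prod>i<n. X i (\<alpha> i)) (idx_set p n d) (\<lambda>i. \<beta> i - \<alpha> i) else 0)"
    using \<beta> by simp
qed

lemma product_is_iterative:
  assumes X: "\<And>i. i < n \<Longrightarrow> axis_descent p n \<delta> d i (X i)"
  shows "is_iterative p n d (restrict (\<lambda>\<alpha>. \<Prod>i<n. X i (\<alpha> i)) (idx_set p n d))"
  unfolding is_iterative_def
proof (intro ballI)
  fix \<alpha> \<beta> assume \<alpha>: "\<alpha> \<in> idx_set p n d" and \<beta>: "\<beta> \<in> idx_set p n d"
  have "(\<Prod>i<n. X i (\<alpha> i)) * (\<Prod>i<n. X i (\<beta> i)) = (\<Prod>i<n. X i (\<alpha> i) * X i (\<beta> i))"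
    by (simp add: prod.distrib)
  also have "\<dots> = (\<Prod>i<n. if below_ppow p (d i) (\<alpha> i + \<beta> i)
      then of_nat ((\<alpha> i + \<beta> i) choose \<alpha> i) * X i (\<alpha> i + \<beta> i) else 0)"
    by (rule prod.cong[OF refl]) (use X \<alpha> \<beta> in \<open>auto simp: axis_descent_def iterative_seq_def idx_set_def\<close>)
  also have "\<dots> = (if (\<lambda>i. \<alpha> i + \<beta> i) \<in> idx_set p n d
      then of_nat (mbinom n \<alpha> \<beta>) * (\<Prod>i<n. X i (\<alpha> i + \<beta> i)) else 0)"
  proof (cases "(\<lambda>i. \<alpha> i + \<beta> i) \<in> idx_set p n d")
    case True
    hence "\<And>i. i < n \<Longrightarrow> below_ppow p (d i) (\<alpha> i + \<beta> i)" unfolding idx_set_def by blast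
    moreover have "(\<Prod>i<n. (of_nat ((\<alpha> i + \<beta> i) choose \<alpha> i) :: 'a)) = of_nat (mbinom n \<alpha> \<beta>)"
      unfolding mbinom_def of_nat_prod using binomial_symmetric[of "\<alpha> _" "\<alpha> _ + \<beta> _"] by simp
    ultimately show ?thesis using True by (simp add: prod.distrib)
  next
    case False
    moreover have "(\<lambda>i. \<alpha> i + \<beta> i) \<in> natn n" using \<alpha> \<beta> unfolding idx_set_def natn_def by auto
    ultimately obtain i where "i < n" "\<not> below_ppow p (d i) (\<alpha> i + \<beta> i)"
      unfolding idx_set_def by blast
    thus ?thesis using False by (intro trans[OF prod_zero]) auto
  qed
  finally show "restrict (\<lambda>\<alpha>. \<Prod>i<n. X i (\<alpha> i)) (idx_set p n d) \<alpha> * restrict (\<lambda>\<alpha>. \<Prod>i<n. X i (\<alpha> i)) (idx_set p n d) \<beta> =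
      (if (\<lambda>i. \<alpha> i + \<beta> i) \<in> idx_set p n d
       then of_nat (mbinom n \<alpha> \<beta>) * restrict (\<lambda>\<alpha>. \<Prod>i<n. X i (\<alpha> i)) (idx_set p n d) (\<lambda>i. \<alpha> i + \<beta> i) else 0)"
    using \<alpha> \<beta> by simp
qed

lemma product_iter_descent:
  assumes "\<And>i. i < n \<Longrightarrow> axis_descent p n \<delta> d i (X i)"
  shows "restrict (\<lambda>\<alpha>. \<Prod>i<n. X i (\<alpha> i)) (idx_set p n d) \<in> iter_descents p n \<delta> d"
  unfolding iter_descents_def using product_is_descent[OF assms] product_is_iterative[OF assms] by simp

lemma construction_iter_descent:
  assumes y: "\<And>i k. i < n \<Longrightarrow> enat k < d i \<Longrightarrow>
    y i k ^ p = 0 \<and> (\<delta> i ^^ (p ^ k)) (y i k) = 1 \<and> (\<forall>j<n. j \<noteq> i \<longrightarrow> \<delta> j (y i k) = 0)"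
  shows "restrict (\<lambda>\<alpha>. \<Prod>i<n. xseq p (\<delta> i) (y i) (\<alpha> i)) (idx_set p n d) \<in> iter_descents p n \<delta> d"
proof (rule product_iter_descent)
  fix i assume i: "i < n"
  interpret char_p_derivation p "\<delta> i" by (rule char_p_derivation[OF i])
  have yi: "\<And>k. enat k < d i \<Longrightarrow> y i k ^ p = 0 \<and> (\<delta> i ^^ (p ^ k)) (y i k) = 1" using y[OF i] by blast
  show "axis_descent p n \<delta> d i (xseq p (\<delta> i) (y i))"
    unfolding axis_descent_def
  proof (intro conjI xseq_descent_seq[OF yi] xseq_iterative[OF yi] allI impI)
    fix l j assume l: "l < n" "l \<noteq> i" and j: "below_ppow p (d i) j"
    show "\<delta> l (xseq p (\<delta> i) (y i) j) = 0"
      using y[OF i] l commute[OF l(1) i] by (intro xseq_eq_0_if_commute[OF derivations[OF l(1)] _ _ j]) auto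
  qed
qed

end

section \<open>Classification of iterative \<open>\<delta>\<close>-descents\<close>

text \<open>Off the powers of \<open>p\<close>, iterativity determines a sequence from smaller indices: for
  \<open>j = p\<^sup>v q\<close> with \<open>p \<nmid> q > 1\<close>, \<open>Y\<^sub>p\<^sub>\<^sup>v Y\<^sub>j\<^sub>-\<^sub>p\<^sub>\<^sup>v = (j choose p\<^sup>v) Y\<^sub>j\<close> and \<open>(j choose p\<^sup>v) \<equiv> q\<close> is a unit.\<close>

lemma iterative_seq_eq_if_not_prime_power:
  assumes prime: "prime p" and char: "of_nat p = (0::'a::comm_ring_1)"
    and Y: "iterative_seq p e (Y :: nat \<Rightarrow> 'a)" and Y': "iterative_seq p e Y'"
    and j: "below_ppow p e j" "1 \<le> j" "\<And>k. j \<noteq> p ^ k"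
    and eq: "\<And>i. i < j \<Longrightarrow> Y i = Y' i"
  shows "Y j = Y' j"
proof -
  obtain v q where vq: "j = p ^ v * q" "\<not> p dvd q" using prime_power_coprime_decomp[OF prime j(2)] .
  have q: "q \<noteq> 0" "q \<noteq> 1" using vq j(2) j(3)[of v] by auto
  define a b where "a = p ^ v" "b = p ^ v * (q - 1)"
  have ab: "a + b = j" unfolding a_b_def using vq q by (cases q) (simp_all add: algebra_simps)
  have "a \<ge> 1" "b \<ge> 1" unfolding a_b_def using prime_gt_0_nat[OF prime] q by auto
  hence "a < j" "b < j" "below_ppow p e a" "below_ppow p e b" using ab j(1) by (auto intro: below_ppow_mono)
  hence "of_nat (j choose a) * Y j = of_nat (j choose a) * Y' j"
    using Y Y' eq ab j(1) unfolding iterative_seq_def by metis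
  moreover have "[j choose a = q] (mod p)" unfolding vq(1) a_b_def by (rule choose_prime_power_mult_cong[OF prime])
  hence "(fp_inv p (j choose a) :: 'a) * of_nat (j choose a) = 1"
    using vq(2) by (intro fp_inv_mult[OF prime char]) (metis cong_dvd_iff)
  ultimately show ?thesis by (metis mult.assoc mult_1)
qed

context commuting_derivations
begin

lemma axis_descent_of_iter_descent:
  assumes y: "y \<in> iter_descents p n \<delta> d" and i: "i < n"
  shows "axis_descent p n \<delta> d i (\<lambda>j. y (mvec i j))"
proof -
  have D: "is_descent p n \<delta> d y" and It: "is_iterative p n d y"
    using y unfolding iter_descents_def by auto
  have idx: "\<And>j. mvec i j \<in> idx_set p n d \<longleftrightarrow> below_ppow p (d i) j"
    using mvec_in_idx_set_iff[OF prime_gt_0_nat[OF prime] i] .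
  have desc: "dpow \<delta> n (mvec l m) (y (mvec i j)) =
      (if \<forall>l'. mvec l m l' \<le> mvec i j l' then y (\<lambda>l'. mvec i j l' - mvec l m l') else 0)"
    if "l < n" "below_ppow p (d i) j" for l m j
    using D that idx mvec_in_natn[of l n m] unfolding is_descent_def by blast
  have "descent_seq p (\<delta> i) (d i) (\<lambda>j. y (mvec i j))"
    unfolding descent_seq_def using D desc[OF i] i
    by (simp add: is_descent_def dpow_mvec mvec_le_iff mvec_diff)
  moreover have "iterative_seq p (d i) (\<lambda>j. y (mvec i j))"
    unfolding iterative_seq_def using It idx i
    by (simp add: is_iterative_def mvec_add mbinom_mvec)
  moreover have "\<delta> l (y (mvec i j)) = 0" if "l < n" "l \<noteq> i" "below_ppow p (d i) j" for l j
  proof -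
    have nc: "\<not> (\<forall>l'. mvec l 1 l' \<le> mvec i j l')" using that by (auto simp: mvec_def dest: spec[of _ l])
    have "dpow \<delta> n (mvec l 1) (y (mvec i j)) = 0" using desc[of l j 1] that by (simp only: if_not_P[OF nc])
    thus ?thesis using that by (simp add: dpow_mvec)
  qed
  ultimately show ?thesis unfolding axis_descent_def by blast
qed

lemma iter_descent_eq_prod_axes:
  assumes y: "y \<in> iter_descents p n \<delta> d" and \<alpha>: "\<alpha> \<in> idx_set p n d"
  shows "y \<alpha> = (\<Prod>i<n. y (mvec i (\<alpha> i)))"
proof -
  have It: "is_iterative p n d y" and y0: "y (\<lambda>_. 0) = 1"
    using y unfolding iter_descents_def is_descent_def by auto
  define trunc where "trunc m l = (if l < m then \<alpha> l else 0)" for m l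
  have tI: "trunc m \<in> idx_set p n d" for m
    using \<alpha> below_ppow_zero[OF prime_gt_0_nat[OF prime]] unfolding idx_set_def natn_def trunc_def by auto
  have "y (trunc m) = (\<Prod>i<m. y (mvec i (\<alpha> i)))" if "m \<le> n" for m
    using that
  proof (induction m)
    case 0
    have "trunc 0 = (\<lambda>_. 0)" unfolding trunc_def by auto
    thus ?case using y0 by simp
  next
    case (Suc m)
    have mI: "mvec m (\<alpha> m) \<in> idx_set p n d"
      using \<alpha> Suc.prems mvec_in_idx_set_iff[OF prime_gt_0_nat[OF prime], of m n] unfolding idx_set_def by simp
    have "(\<lambda>l. trunc m l + mvec m (\<alpha> m) l) = trunc (Suc m)"
      unfolding trunc_def mvec_def by auto
    moreover have "mbinom n (trunc m) (mvec m (\<alpha> m)) = 1"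
      unfolding mbinom_def by (rule prod.neutral) (auto simp: trunc_def mvec_def)
    ultimately have "y (trunc m) * y (mvec m (\<alpha> m)) = y (trunc (Suc m))"
      using It tI mI unfolding is_iterative_def by (metis mult_1 of_nat_1)
    thus ?case using Suc by simp
  qed
  moreover have "trunc n = \<alpha>" using \<alpha> unfolding trunc_def idx_set_def natn_def by (auto simp: not_less)
  ultimately show ?thesis by auto
qed

lemma lam_characterization:
  assumes x': "x' \<in> iter_descents p n \<delta> d" and y: "y \<in> iter_descents p n \<delta> d"
    and i: "i < n" and k: "enat k < d i"
  shows "lam p \<delta> d x' i k y \<in> kerD (\<delta> i) \<and>
     y (mvec i (p ^ k)) - lam p \<delta> d x' i k y \<in> kernel_span p (\<delta> i) (d i) (\<lambda>j. x' (mvec i j))"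
proof -
  interpret char_p_derivation p "\<delta> i" by (rule char_p_derivation[OF i])
  have X: "descent_seq p (\<delta> i) (d i) (\<lambda>j. x' (mvec i j))"
    using axis_descent_of_iter_descent[OF x' i] unfolding axis_descent_def by blast
  have Y: "descent_seq p (\<delta> i) (d i) (\<lambda>j. y (mvec i j))"
    using axis_descent_of_iter_descent[OF y i] unfolding axis_descent_def by blast
  have bk: "below_ppow p (d i) (p ^ k)" using below_ppow_ppow_iff[OF prime_gt_1_nat[OF prime]] k by simp
  have "y (mvec i (p ^ k)) \<in> Nset p (\<delta> i) (d i)"
  proof (cases "d i")
    case (enat M)
    hence "(\<delta> i ^^ (p ^ M)) (y (mvec i (p ^ k))) = 0" using Y bk unfolding descent_seq_def by simp
    thus ?thesis unfolding Nset_def enat by simp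
  next
    case infinity
    have "(\<delta> i ^^ Suc (p ^ k)) (y (mvec i (p ^ k))) = 0"
      using Y bk unfolding descent_seq_def by (simp add: derivation_one[OF derivation])
    thus ?thesis unfolding Nset_def infinity by (simp only: mem_Collect_eq enat.case) blast
  qed
  then obtain b m where bm: "b \<in> kerD (\<delta> i)" "m \<in> kernel_span p (\<delta> i) (d i) (\<lambda>j. x' (mvec i j))"
      "y (mvec i (p ^ k)) = b + m"
    unfolding Nset_eq_kernel_plus_kernel_span[OF X] by blast
  hence "lam p \<delta> d x' i k y = b"
    unfolding lam_def mset_eq_kernel_span by (intro kernel_component_eq[OF X]) simp_all
  thus ?thesis using bm by simp
qed

lemma lam_in_Adelta_nilpotent:
  assumes x': "x' \<in> iter_descents p n \<delta> d" and y: "y \<in> iter_descents p n \<delta> d"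
    and i: "i < n" and k: "enat k < d i"
  shows "lam p \<delta> d x' i k y \<in> Adelta n \<delta> \<and> lam p \<delta> d x' i k y ^ p = 0"
proof -
  interpret char_p_derivation p "\<delta> i" by (rule char_p_derivation[OF i])
  define b where "b = lam p \<delta> d x' i k y"
  define v where "v = y (mvec i (p ^ k))"
  have X: "axis_descent p n \<delta> d i (\<lambda>j. x' (mvec i j))" by (rule axis_descent_of_iter_descent[OF x' i])
  have Y: "axis_descent p n \<delta> d i (\<lambda>j. y (mvec i j))" by (rule axis_descent_of_iter_descent[OF y i])
  have b: "b \<in> kerD (\<delta> i)" "v - b \<in> kernel_span p (\<delta> i) (d i) (\<lambda>j. x' (mvec i j))"
    using lam_characterization[OF x' y i k] unfolding b_def v_def by auto
  have bk: "below_ppow p (d i) (p ^ k)" using below_ppow_ppow_iff[OF prime_gt_1_nat[OF prime]] k by simp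
  have "\<delta> l b = 0" if l: "l < n" for l
  proof (cases "l = i")
    case False
    show ?thesis
    proof (rule kernel_component_eq_0_if_commute[OF _ derivations[OF l] commute[OF i l] _ _ b])
      show "descent_seq p (\<delta> i) (d i) (\<lambda>j. x' (mvec i j))" using X unfolding axis_descent_def by blast
      show "\<And>j. below_ppow p (d i) j \<Longrightarrow> \<delta> l (x' (mvec i j)) = 0" using X l False unfolding axis_descent_def by blast
      show "\<delta> l v = 0" using Y l False bk unfolding axis_descent_def v_def by blast
    qed
  qed (use b(1) in \<open>simp add: kerD_def\<close>)
  moreover have "1 \<le> p ^ k" using prime_gt_0_nat[OF prime] by simp
  hence "v ^ p = 0"
    using Y bk iterative_seq_pow_prime[OF prime char] unfolding axis_descent_def v_def by blast
  moreover have "(v - b) ^ p = 0"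
    using kernel_span_pow_prime b(2) X unfolding axis_descent_def by blast
  moreover have "v ^ p = b ^ p + (v - b) ^ p" using frobenius_add[OF prime char, of b "v - b"] by simp
  ultimately show ?thesis unfolding b_def Adelta_def by simp
qed

lemma rmap_in_Cset:
  assumes "x' \<in> iter_descents p n \<delta> d" "y \<in> iter_descents p n \<delta> d"
  shows "rmap p n \<delta> d x' y \<in> Cset p n \<delta> d"
  using lam_in_Adelta_nilpotent[OF assms] unfolding Cset_def rmap_def Kset_def by auto

end

context commuting_derivations
begin

text \<open>At \<open>p\<^sup>k\<close> the difference lies in \<open>m\<^sub>i\<close> (equal components \<open>\<lambda>\<^sub>i\<^sub>k\<close>) and, by the descent property,
  in \<open>kerD (\<delta> i)\<close> once the two descents agree at \<open>p\<^sup>k - 1\<close>.\<close>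

lemma axis_eq_at_prime_power:
  assumes x': "x' \<in> iter_descents p n \<delta> d" and y: "y \<in> iter_descents p n \<delta> d"
    and y': "y' \<in> iter_descents p n \<delta> d" and i: "i < n" and k: "enat k < d i"
    and lam: "lam p \<delta> d x' i k y = lam p \<delta> d x' i k y'"
    and below: "y (mvec i (p ^ k - 1)) = y' (mvec i (p ^ k - 1))"
  shows "y (mvec i (p ^ k)) = y' (mvec i (p ^ k))"
proof -
  interpret char_p_derivation p "\<delta> i" by (rule char_p_derivation[OF i])
  have X: "descent_seq p (\<delta> i) (d i) (\<lambda>j. x' (mvec i j))"
    using axis_descent_of_iter_descent[OF x' i] unfolding axis_descent_def by blast
  have "(y (mvec i (p ^ k)) - lam p \<delta> d x' i k y) - (y' (mvec i (p ^ k)) - lam p \<delta> d x' i k y')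
      \<in> kernel_span p (\<delta> i) (d i) (\<lambda>j. x' (mvec i j))"
    by (rule kernel_span_diff) (use lam_characterization[OF x' y i k] lam_characterization[OF x' y' i k] in simp_all)
  hence span: "y (mvec i (p ^ k)) - y' (mvec i (p ^ k)) \<in> kernel_span p (\<delta> i) (d i) (\<lambda>j. x' (mvec i j))"
    using lam by simp
  have bk: "below_ppow p (d i) (p ^ k)" "1 \<le> p ^ k"
    using below_ppow_ppow_iff[OF prime_gt_1_nat[OF prime]] k prime_gt_0_nat[OF prime] by simp_all
  have "\<delta> i (y (mvec i (p ^ k))) = y (mvec i (p ^ k - 1))" "\<delta> i (y' (mvec i (p ^ k))) = y' (mvec i (p ^ k - 1))"
    using axis_descent_of_iter_descent[OF y i] axis_descent_of_iter_descent[OF y' i]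
      descent_seq_step[OF _ bk, of "\<delta> i" "\<lambda>j. y (mvec i j)"] descent_seq_step[OF _ bk, of "\<delta> i" "\<lambda>j. y' (mvec i j)"]
    unfolding axis_descent_def by simp_all
  hence "y (mvec i (p ^ k)) - y' (mvec i (p ^ k)) \<in> kerD (\<delta> i)"
    using below unfolding kerD_def by (simp add: derivation_diff[OF derivation])
  hence "y (mvec i (p ^ k)) - y' (mvec i (p ^ k)) = 0" using kernel_span_inter_kernel[OF X _ span] by blast
  thus ?thesis by simp
qed

lemma axis_eq_if_lam_eq:
  assumes x': "x' \<in> iter_descents p n \<delta> d" and y: "y \<in> iter_descents p n \<delta> d"
    and y': "y' \<in> iter_descents p n \<delta> d" and i: "i < n"
    and lam: "\<And>k. enat k < d i \<Longrightarrow> lam p \<delta> d x' i k y = lam p \<delta> d x' i k y'"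
  shows "below_ppow p (d i) j \<Longrightarrow> y (mvec i j) = y' (mvec i j)"
proof (induction j rule: less_induct)
  case (less j)
  have Y: "axis_descent p n \<delta> d i (\<lambda>j. y (mvec i j))" "axis_descent p n \<delta> d i (\<lambda>j. y' (mvec i j))"
    using axis_descent_of_iter_descent[OF y i] axis_descent_of_iter_descent[OF y' i] by auto
  have "j = 0 \<or> (\<exists>k. j = p ^ k) \<or> (1 \<le> j \<and> (\<forall>k. j \<noteq> p ^ k))" by auto
  thus ?case
  proof (elim disjE exE conjE)
    assume "j = 0"
    thus ?thesis using Y unfolding axis_descent_def descent_seq_def by simp
  next
    fix k assume j: "j = p ^ k"
    have k: "enat k < d i" using below_ppow_ppow_iff[OF prime_gt_1_nat[OF prime]] less.prems j by simp
    have "p ^ k - 1 < p ^ k" using prime_gt_0_nat[OF prime] by simp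
    thus ?thesis using axis_eq_at_prime_power[OF x' y y' i k lam[OF k]] less.IH[of "p ^ k - 1"]
        below_ppow_mono[OF less.prems, of "p ^ k - 1"] j by simp
  next
    assume j: "1 \<le> j" "\<forall>k. j \<noteq> p ^ k"
    show ?thesis
    proof (rule iterative_seq_eq_if_not_prime_power[OF prime char])
      show "iterative_seq p (d i) (\<lambda>j. y (mvec i j))" "iterative_seq p (d i) (\<lambda>j. y' (mvec i j))"
        using Y unfolding axis_descent_def by blast+
      fix l assume "l < j"
      thus "y (mvec i l) = y' (mvec i l)" using less.IH[of l] below_ppow_mono[OF less.prems, of l] by simp
    qed (use less.prems j in auto)
  qed
qed

lemma rmap_inj:
  assumes x': "x' \<in> iter_descents p n \<delta> d"
  shows "inj_on (rmap p n \<delta> d x') (iter_descents p n \<delta> d)"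
proof (rule inj_onI)
  fix y y' assume y: "y \<in> iter_descents p n \<delta> d" and y': "y' \<in> iter_descents p n \<delta> d"
    and eq: "rmap p n \<delta> d x' y = rmap p n \<delta> d x' y'"
  have lam: "lam p \<delta> d x' i k y = lam p \<delta> d x' i k y'" if "i < n" "enat k < d i" for i k
    using fun_cong[OF eq, of "(i, k)"] that unfolding rmap_def Kset_def by simp
  show "y = y'"
  proof (rule extensionalityI[of _ "idx_set p n d"])
    show "y \<in> extensional (idx_set p n d)" "y' \<in> extensional (idx_set p n d)"
      using y y' unfolding iter_descents_def by auto
    fix \<alpha> assume \<alpha>: "\<alpha> \<in> idx_set p n d"
    have "(\<Prod>i<n. y (mvec i (\<alpha> i))) = (\<Prod>i<n. y' (mvec i (\<alpha> i)))"
      using \<alpha> axis_eq_if_lam_eq[OF x' y y' _ lam] unfolding idx_set_def by (intro prod.cong) auto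
    thus "y \<alpha> = y' \<alpha>" using iter_descent_eq_prod_axes[OF y \<alpha>] iter_descent_eq_prod_axes[OF y' \<alpha>] by simp
  qed
qed

lemma axis_descent_convolution:
  assumes X: "axis_descent p n \<delta> d i X" and i: "i < n"
    and c: "\<And>k. enat k < d i \<Longrightarrow> c k \<in> Adelta n \<delta> \<and> c k ^ p = 0"
  shows "axis_descent p n \<delta> d i (convolution X (digit_seq p c))"
proof -
  interpret char_p_derivation p "\<delta> i" by (rule char_p_derivation[OF i])
  have L: "\<delta> l (digit_seq p c j) = 0" if "l < n" "below_ppow p (d i) j" for l j
    by (rule digit_seq_eq_0_if_derivation[OF prime char derivations[OF that(1)] _ that(2)])
      (use c that in \<open>auto simp: Adelta_def\<close>)
  show ?thesis unfolding axis_descent_def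
  proof (intro conjI allI impI)
    show "descent_seq p (\<delta> i) (d i) (convolution X (digit_seq p c))"
      by (rule convolution_descent_seq)
        (use X L i in \<open>auto simp: axis_descent_def digit_seq_zero_index[OF prime char]\<close>)
    show "iterative_seq p (d i) (convolution X (digit_seq p c))"
      by (rule iterative_convolution[OF prime char], use X in \<open>simp add: axis_descent_def\<close>,
          rule iterative_digit_seq[OF prime char]) (use c in blast)
    fix l j assume "l < n" "l \<noteq> i" "below_ppow p (d i) j"
    thus "\<delta> l (convolution X (digit_seq p c) j) = 0"
      using X L by (intro convolution_eq_0_if_derivation[OF derivations]) (auto simp: axis_descent_def)
  qed
qed

lemma restrict_prod_mvec:
  assumes Y: "\<And>l. l < n \<Longrightarrow> Y l 0 = 1" and i: "i < n" and j: "below_ppow p (d i) j"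
  shows "restrict (\<lambda>\<alpha>. \<Prod>l<n. Y l (\<alpha> l)) (idx_set p n d) (mvec i j) = Y i j"
proof -
  have "(\<Prod>l<n. Y l (mvec i j l)) = (\<Prod>l<n. if l = i then Y i j else 1)"
    using Y by (intro prod.cong) (auto simp: mvec_def)
  thus ?thesis using i j mvec_in_idx_set_iff[OF prime_gt_0_nat[OF prime] i] by simp
qed

lemma rmap_surj:
  assumes x': "x' \<in> iter_descents p n \<delta> d" and c: "c \<in> Cset p n \<delta> d"
  shows "\<exists>y\<in>iter_descents p n \<delta> d. rmap p n \<delta> d x' y = c"
proof -
  have cK: "c (i, k) \<in> Adelta n \<delta> \<and> c (i, k) ^ p = 0" if "i < n" "enat k < d i" for i k
    using c that unfolding Cset_def Kset_def by blast
  define Y where "Y i = convolution (\<lambda>j. x' (mvec i j)) (digit_seq p (\<lambda>k. c (i, k)))" for i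
  have Y: "axis_descent p n \<delta> d i (Y i)" if "i < n" for i
    unfolding Y_def using that cK axis_descent_of_iter_descent[OF x'] by (intro axis_descent_convolution) auto
  define y where "y = restrict (\<lambda>\<alpha>. \<Prod>i<n. Y i (\<alpha> i)) (idx_set p n d)"
  have "lam p \<delta> d x' i k y = c (i, k)" if ik: "i < n" "enat k < d i" for i k
  proof -
    interpret char_p_derivation p "\<delta> i" by (rule char_p_derivation[OF ik(1)])
    have bk: "below_ppow p (d i) (p ^ k)" using below_ppow_ppow_iff[OF prime_gt_1_nat[OF prime]] ik by simp
    have X: "descent_seq p (\<delta> i) (d i) (\<lambda>j. x' (mvec i j))"
      using axis_descent_of_iter_descent[OF x' ik(1)] unfolding axis_descent_def by blast
    have "y (mvec i (p ^ k)) = Y i (p ^ k)"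
      unfolding y_def using Y ik bk by (intro restrict_prod_mvec) (auto simp: axis_descent_def descent_seq_def)
    moreover have "Y i (p ^ k) - c (i, k) \<in> kernel_span p (\<delta> i) (d i) (\<lambda>j. x' (mvec i j))"
    proof -
      have "\<forall>k'. enat k' < d i \<longrightarrow> \<delta> i (c (i, k')) = 0" using cK ik(1) unfolding Adelta_def by blast
      hence L: "digit_seq p (\<lambda>k. c (i, k)) l \<in> kerD (\<delta> i)" if "below_ppow p (d i) l" for l
        unfolding kerD_def mem_Collect_eq using that by (rule digit_seq_eq_0_if_derivation[OF prime char derivation])
      have "Y i (p ^ k) - digit_seq p (\<lambda>k. c (i, k)) (p ^ k) \<in> kernel_span p (\<delta> i) (d i) (\<lambda>j. x' (mvec i j))"
        unfolding Y_def by (rule convolution_minus_mem_kernel_span[OF _ L bk]) (use X in \<open>simp add: descent_seq_def\<close>)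
      thus ?thesis by (simp add: digit_seq_prime_power[OF prime char])
    qed
    moreover have "c (i, k) \<in> kerD (\<delta> i)" using cK ik unfolding Adelta_def kerD_def by blast
    ultimately show ?thesis
      unfolding lam_def mset_eq_kernel_span by (intro kernel_component_eq[OF X]) simp_all
  qed
  hence "rmap p n \<delta> d x' y = c"
    using c unfolding rmap_def Cset_def Kset_def by (intro extensionalityI[of _ "Kset n d"]) (auto simp: Kset_def)
  moreover have "y \<in> iter_descents p n \<delta> d" unfolding y_def using Y by (rule product_iter_descent)
  ultimately show ?thesis by blast
qed

lemma rmap_bij:
  assumes "x' \<in> iter_descents p n \<delta> d"
  shows "bij_betw (rmap p n \<delta> d x') (iter_descents p n \<delta> d) (Cset p n \<delta> d)"
  unfolding bij_betw_def using rmap_inj[OF assms] rmap_in_Cset[OF assms] rmap_surj[OF assms] by blast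

lemma iter_descents_eq_singleton:
  assumes reduced: "\<forall>a\<in>Adelta n \<delta>. \<forall>k. a ^ k = 0 \<longrightarrow> a = 0"
    and x: "x \<in> iter_descents p n \<delta> d"
  shows "iter_descents p n \<delta> d = {x}"
proof -
  have zero: "c = restrict (\<lambda>_. 0) (Kset n d)" if c: "c \<in> Cset p n \<delta> d" for c
  proof (rule extensionalityI[of _ "Kset n d"])
    show "c \<in> extensional (Kset n d)" using c unfolding Cset_def by blast
    fix ik assume "ik \<in> Kset n d"
    hence "c ik \<in> Adelta n \<delta>" "c ik ^ p = 0" using c unfolding Cset_def by blast+
    thus "c ik = restrict (\<lambda>_. 0) (Kset n d) ik" using reduced \<open>ik \<in> Kset n d\<close> by auto
  qed simp
  hence "rmap p n \<delta> d x z = rmap p n \<delta> d x x" if "z \<in> iter_descents p n \<delta> d" for z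
    using zero[OF rmap_in_Cset[OF x that]] zero[OF rmap_in_Cset[OF x x]] by simp
  thus ?thesis using inj_onD[OF rmap_inj[OF x]] x by blast
qed

lemma axis_linear_independent:
  assumes x': "x' \<in> iter_descents p n \<delta> d" and i: "i < n"
  shows "\<forall>J c. finite J \<and> J \<subseteq> jset p (d i) \<and> (\<forall>j\<in>J. c j \<in> kerD (\<delta> i)) \<and>
    (\<Sum>j\<in>J. c j * x' (mvec i j)) = 0 \<longrightarrow> (\<forall>j\<in>J. c j * x' (mvec i j) = 0)"
proof (intro allI impI, elim conjE)
  fix J c assume J: "finite J" "J \<subseteq> jset p (d i)" "\<forall>j\<in>J. c j \<in> kerD (\<delta> i)"
    and sum: "(\<Sum>j\<in>J. c j * x' (mvec i j)) = 0"
  interpret char_p_derivation p "\<delta> i" by (rule char_p_derivation[OF i])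
  have "descent_seq p (\<delta> i) (d i) (\<lambda>j. x' (mvec i j))"
    using axis_descent_of_iter_descent[OF x' i] unfolding axis_descent_def by blast
  hence "\<forall>j\<in>J. c j = 0"
    by (rule descent_seq_linear_independent) (use J sum in \<open>auto simp: jset_def kerD_def\<close>)
  thus "\<forall>j\<in>J. c j * x' (mvec i j) = 0" by simp
qed

lemma Nset_eq_kerD_plus_mset:
  assumes x': "x' \<in> iter_descents p n \<delta> d" and i: "i < n"
  shows "Nset p (\<delta> i) (d i) = {a + m | a m. a \<in> kerD (\<delta> i) \<and> m \<in> mset p (\<delta> i) (d i) x' i}"
proof -
  interpret char_p_derivation p "\<delta> i" by (rule char_p_derivation[OF i])
  show ?thesis unfolding mset_eq_kernel_span
    using axis_descent_of_iter_descent[OF x' i] unfolding axis_descent_def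
    by (intro Nset_eq_kernel_plus_kernel_span) blast
qed

lemma kerD_inter_mset:
  assumes x': "x' \<in> iter_descents p n \<delta> d" and i: "i < n"
  shows "kerD (\<delta> i) \<inter> mset p (\<delta> i) (d i) x' i = {0}"
proof -
  interpret char_p_derivation p "\<delta> i" by (rule char_p_derivation[OF i])
  have "descent_seq p (\<delta> i) (d i) (\<lambda>j. x' (mvec i j))"
    using axis_descent_of_iter_descent[OF x' i] unfolding axis_descent_def by blast
  hence "a = 0" if "a \<in> kerD (\<delta> i)" "a \<in> kernel_span p (\<delta> i) (d i) (\<lambda>j. x' (mvec i j))" for a
    using kernel_span_inter_kernel that by blast
  moreover have "0 \<in> kerD (\<delta> i)" using derivation_zero[OF derivation] by (simp add: kerD_def)
  ultimately show ?thesis unfolding mset_eq_kernel_span using kernel_span_zero by blast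
qed

end

theorem theorem2p10:
  fixes p n :: nat
    and \<delta> :: "nat \<Rightarrow> 'a::comm_ring_1 \<Rightarrow> 'a"
    and d :: "nat \<Rightarrow> enat"
    and y :: "nat \<Rightarrow> nat \<Rightarrow> 'a"
  assumes "prime p"
    and "of_nat p = (0::'a)"
    and "\<forall>i<n. is_derivation (\<delta> i)"
    and "\<forall>i<n. \<forall>j<n. \<delta> i \<circ> \<delta> j = \<delta> j \<circ> \<delta> i"
    and "\<forall>i<n. \<forall>k. enat k < d i \<longrightarrow>
           y i k ^ p = 0 \<and> (\<delta> i ^^ (p ^ k)) (y i k) = 1 \<and> (\<forall>j<n. j \<noteq> i \<longrightarrow> \<delta> j (y i k) = 0)"
  shows "restrict (\<lambda>\<alpha>. \<Prod>i<n. xseq p (\<delta> i) (y i) (\<alpha> i)) (idx_set p n d) \<in> iter_descents p n \<delta> d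
    \<and> (\<forall>x' \<in> iter_descents p n \<delta> d.
         (\<forall>i<n.
            (\<forall>J c. finite J \<and> J \<subseteq> jset p (d i) \<and> (\<forall>j\<in>J. c j \<in> kerD (\<delta> i))
                   \<and> (\<Sum>j\<in>J. c j * x' (mvec i j)) = 0 \<longrightarrow> (\<forall>j\<in>J. c j * x' (mvec i j) = 0))
          \<and> Nset p (\<delta> i) (d i) = {a + m | a m. a \<in> kerD (\<delta> i) \<and> m \<in> mset p (\<delta> i) (d i) x' i}
          \<and> kerD (\<delta> i) \<inter> mset p (\<delta> i) (d i) x' i = {0})
       \<and> bij_betw (rmap p n \<delta> d x') (iter_descents p n \<delta> d) (Cset p n \<delta> d))
    \<and> ((\<forall>a\<in>Adelta n \<delta>. \<forall>k. a ^ k = 0 \<longrightarrow> a = 0) \<longrightarrow>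
         iter_descents p n \<delta> d = {restrict (\<lambda>\<alpha>. \<Prod>i<n. xseq p (\<delta> i) (y i) (\<alpha> i)) (idx_set p n d)})"
proof -
  interpret commuting_derivations p n \<delta> d
    using assms(1-4) by unfold_locales auto
  have x: "restrict (\<lambda>\<alpha>. \<Prod>i<n. xseq p (\<delta> i) (y i) (\<alpha> i)) (idx_set p n d) \<in> iter_descents p n \<delta> d"
    using assms(5) by (intro construction_iter_descent) blast
  show ?thesis
    using x by (simp add: axis_linear_independent Nset_eq_kerD_plus_mset kerD_inter_mset rmap_bij
      iter_descents_eq_singleton)
qed

end
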